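(* For every $N$-relay FD 1-2-1 network with a directed graph $G=([0:N+1],E)$ and positive rational link capacities as in the context, $\mathsf{C}_{\rm cs,iid}$ (FD states) equals the optimal value of the linear program $$\mathrm{P1}:\ \max\sum_{p\in\mathcal P}x_p\mathsf C_p\quad\text{s.t.}\quad x_p\ge0\ \ \forall p\in\mathcal P;\qquad \sum_{p\in\mathcal P_i}x_p f^p_{p.\mathrm{nx}(i),i}\le1\ \ \forall i\in[0:N];\qquad \sum_{p\in\mathcal P_i}x_p f^p_{i,p.\mathrm{pr}(i)}\le1\ \ \forall i\in[1:N+1].$$
   Context: Nodes are $[0:N+1]$; node $0$ is the source, $N+1$ the destination, $[1:N]$ relays. Let $E\subseteq\{(i,j): i\in[0:N],\ j\in[1:N+1],\ i\ne j\}$ be a set of directed links; each $(i,j)\in E$ has a positive rational capacity $\ell_{j,i}$, and $\ell_{j,i}=0$ for $(i,j)\notin E$. FD network states: a state $s$ consists of sets $s_{i,t}\subseteq[1:N+1]\setminus\{i\}$ and $s_{i,r}\subseteq[0:N]\setminus\{i\}$, each of cardinality at most $1$, for $i\in[0:N+1]$, with $s_{0,r}=s_{N+1,t}=\emptyset$; $\mathcal S$ is the finite set of all states. Link $(i,j)$ is active in $s$ if $j\in s_{i,t}$ and $i\in s_{j,r}$. Define $$\mathsf{C}_{\rm cs,iid}=\max_{\lambda}\ \min_{\Omega}\ \sum_{i\in\Omega,\ j\in\Omega^c}\Big(\sum_{s\in\mathcal S:\ (i,j)\text{ active in }s}\lambda_s\Big)\ell_{j,i},$$ with the maximum over probability vectors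 $(\lambda_s)_{s\in\mathcal S}$, the minimum over $\Omega$ with $0\in\Omega\subseteq[0:N]$, and $\Omega^c=[0:N+1]\setminus\Omega$. Paths: $\mathcal P$ is the set of all directed paths $p=(v_0,v_1,\dots,v_m)$ of distinct nodes with $v_0=0$, $v_m=N+1$ and $(v_{k-1},v_k)\in E$ for all $k$. For a node $i$ on $p$, $p.\mathrm{nx}(i)$ and $p.\mathrm{pr}(i)$ denote the node following and preceding $i$ on $p$. $\mathcal P_i\subseteq\mathcal P$ is the set of paths containing node $i$ (so $\mathcal P_0=\mathcal P_{N+1}=\mathcal P$). $\mathsf C_p=\min_{(i,j)\text{ consecutive on }p}\ell_{j,i}$, and for consecutive $(i,j)$ on $p$, $f^p_{j,i}=\mathsf C_p/\ell_{j,i}$. *)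

theory Defs
  imports Complex_Main
begin

text \<open>Nodes are natural numbers 0..N+1; node 0 is the source, N+1 the destination.
  A link (i,j) has capacity ell j i (note the index order of the paper, ell_{j,i}).\<close>

definition valid_network :: "nat \<Rightarrow> (nat \<times> nat) set \<Rightarrow> (nat \<Rightarrow> nat \<Rightarrow> real) \<Rightarrow> bool" where
  "valid_network N E ell \<longleftrightarrow>
     E \<subseteq> {(i,j). i \<le> N \<and> 1 \<le> j \<and> j \<le> N + 1 \<and> i \<noteq> j} \<and>
     (\<forall>i j. (i,j) \<in> E \<longrightarrow> ell j i \<in> \<rat> \<and> ell j i > 0) \<and>
     (\<forall>i j. (i,j) \<notin> E \<longrightarrow> ell j i = 0)"

text \<open>An FD state is a pair (st, sr) where st i = s_{i,t} and sr i = s_{i,r};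
  outside [0:N+1] both are fixed to be empty (so the state set is finite).\<close>

type_synonym state = "(nat \<Rightarrow> nat set) \<times> (nat \<Rightarrow> nat set)"

definition fd_states :: "nat \<Rightarrow> state set" where
  "fd_states N = {(st, sr).
      (\<forall>i \<le> N + 1. st i \<subseteq> {1..N+1} - {i} \<and> card (st i) \<le> 1 \<and>
                    sr i \<subseteq> {0..N} - {i} \<and> card (sr i) \<le> 1) \<and>
      (\<forall>i > N + 1. st i = {} \<and> sr i = {}) \<and>
      sr 0 = {} \<and> st (N + 1) = {}}"

definition link_active :: "state \<Rightarrow> nat \<Rightarrow> nat \<Rightarrow> bool" where
  "link_active s i j \<longleftrightarrow> j \<in> fst s i \<and> i \<in> snd s j"

definition prob_vector :: "nat \<Rightarrow> (state \<Rightarrow> real) \<Rightarrow> bool" where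
  "prob_vector N lam \<longleftrightarrow> (\<forall>s \<in> fd_states N. lam s \<ge> 0) \<and> (\<Sum>s \<in> fd_states N. lam s) = 1"

definition cuts :: "nat \<Rightarrow> nat set set" where
  "cuts N = {\<Omega>. 0 \<in> \<Omega> \<and> \<Omega> \<subseteq> {0..N}}"

definition cut_value :: "nat \<Rightarrow> (nat \<Rightarrow> nat \<Rightarrow> real) \<Rightarrow> (state \<Rightarrow> real) \<Rightarrow> nat set \<Rightarrow> real" where
  "cut_value N ell lam \<Omega> =
     (\<Sum>i \<in> \<Omega>. \<Sum>j \<in> {0..N+1} - \<Omega>.
        (\<Sum>s \<in> {s \<in> fd_states N. link_active s i j}. lam s) * ell j i)"

text \<open>C_cs,iid = max over probability vectors of min over cuts; the max is rendered as a
  supremum (it is attained).\<close>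

definition C_cs_iid :: "nat \<Rightarrow> (nat \<Rightarrow> nat \<Rightarrow> real) \<Rightarrow> real" where
  "C_cs_iid N ell = Sup {Min (cut_value N ell lam ` cuts N) | lam. prob_vector N lam}"

definition paths :: "nat \<Rightarrow> (nat \<times> nat) set \<Rightarrow> nat list set" where
  "paths N E = {p. distinct p \<and> p \<noteq> [] \<and> hd p = 0 \<and> last p = N + 1 \<and>
                   (\<forall>k. Suc k < length p \<longrightarrow> (p ! k, p ! Suc k) \<in> E)}"

definition nx :: "nat list \<Rightarrow> nat \<Rightarrow> nat" where
  "nx p i = (THE j. \<exists>k. Suc k < length p \<and> p ! k = i \<and> p ! Suc k = j)"

definition pr :: "nat list \<Rightarrow> nat \<Rightarrow> nat" where
  "pr p i = (THE j. \<exists>k. Suc k < length p \<and> p ! k = j \<and> p ! Suc k = i)"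

definition path_cap :: "(nat \<Rightarrow> nat \<Rightarrow> real) \<Rightarrow> nat list \<Rightarrow> real" where
  "path_cap ell p = Min {ell (p ! Suc k) (p ! k) | k. Suc k < length p}"

definition fp :: "(nat \<Rightarrow> nat \<Rightarrow> real) \<Rightarrow> nat list \<Rightarrow> nat \<Rightarrow> nat \<Rightarrow> real" where
  "fp ell p j i = path_cap ell p / ell j i"

definition P1_feasible :: "nat \<Rightarrow> (nat \<times> nat) set \<Rightarrow> (nat \<Rightarrow> nat \<Rightarrow> real) \<Rightarrow> (nat list \<Rightarrow> real) \<Rightarrow> bool" where
  "P1_feasible N E ell x \<longleftrightarrow>
     (\<forall>p \<in> paths N E. x p \<ge> 0) \<and>
     (\<forall>i \<in> {0..N}. (\<Sum>p \<in> {p \<in> paths N E. i \<in> set p}. x p * fp ell p (nx p i) i) \<le> 1) \<and>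
     (\<forall>i \<in> {1..N+1}. (\<Sum>p \<in> {p \<in> paths N E. i \<in> set p}. x p * fp ell p i (pr p i)) \<le> 1)"

text \<open>Optimal value of the LP P1 (rendered as a supremum; the LP optimum is attained).\<close>

definition P1_value :: "nat \<Rightarrow> (nat \<times> nat) set \<Rightarrow> (nat \<Rightarrow> nat \<Rightarrow> real) \<Rightarrow> real" where
  "P1_value N E ell = Sup {(\<Sum>p \<in> paths N E. x p * path_cap ell p) | x. P1_feasible N E ell x}"

end

theory Submission
  imports Defs
begin

text \<open>
  For a probability vector \<open>\<lambda>\<close> on the FD states let \<open>y\<^sub>i\<^sub>j\<close> be the probability that link \<open>(i, j)\<close>
  is active.  The inner minimum of \<open>C_cs_iid\<close> is then the minimum cut of the network with link
  capacities \<open>y\<^sub>i\<^sub>j ell\<^sub>j\<^sub>i\<close>.  By max-flow min-cut and flow decomposition it is the value of a path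
  flow, and dividing the flow on each path \<open>p\<close> by \<open>C\<^sub>p\<close> gives a feasible point of P1, because the
  constraints of P1 only say that the normalised link loads have row and column sums at most one.
  Conversely the normalised link loads of a feasible point of P1 form a doubly substochastic
  matrix on \<open>[0:N] \<times> [1:N+1]\<close>; by Birkhoff--von Neumann it is a convex combination of partial
  matchings, i.e. of FD states, and with these activations every cut carries the whole path flow.
\<close>

section \<open>Hall's marriage theorem and the Birkhoff--von Neumann decomposition\<close>

definition hall_condition :: "'a set \<Rightarrow> ('a \<Rightarrow> 'b set) \<Rightarrow> bool" where
  "hall_condition R nb \<longleftrightarrow> (\<forall>A\<subseteq>R. card A \<le> card (\<Union>(nb ` A)))"

lemma hall_condition_remove:
  assumes "finite R" "\<forall>r\<in>R. finite (nb r)" "r0 \<in> R"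
    and surplus: "\<forall>A. A \<subseteq> R \<and> A \<noteq> {} \<and> A \<noteq> R \<longrightarrow> card A < card (\<Union>(nb ` A))"
  shows "hall_condition (R - {r0}) (\<lambda>r. nb r - {c})"
  unfolding hall_condition_def
proof (intro allI impI)
  fix A assume A: "A \<subseteq> R - {r0}"
  show "card A \<le> card (\<Union>((\<lambda>r. nb r - {c}) ` A))"
  proof (cases "A = {}")
    case False
    have fin: "finite (\<Union>(nb ` A))" using A assms(1,2) by (intro finite_UN_I) (auto intro: finite_subset)
    have "card A < card (\<Union>(nb ` A))" using surplus A False assms(3) by blast
    also have "\<dots> \<le> Suc (card (\<Union>(nb ` A) - {c}))"
      using fin by (cases "c \<in> \<Union>(nb ` A)") (auto simp: card_Suc_Diff1)
    finally show ?thesis by simp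
  qed simp
qed

lemma hall_condition_contract:
  assumes "finite R" "\<forall>r\<in>R. finite (nb r)" "hall_condition R nb"
    and A: "A \<subseteq> R" "card (\<Union>(nb ` A)) = card A"
  shows "hall_condition (R - A) (\<lambda>r. nb r - \<Union>(nb ` A))"
  unfolding hall_condition_def
proof (intro allI impI)
  fix B assume B: "B \<subseteq> R - A"
  have fin: "finite A" "finite B" using A(1) B assms(1) by (auto intro: finite_subset)
  have "A \<union> B \<subseteq> R" using A(1) B by blast
  have eq: "\<Union>(nb ` (A \<union> B)) - \<Union>(nb ` A) = \<Union>((\<lambda>r. nb r - \<Union>(nb ` A)) ` B)" by auto
  have "card (\<Union>(nb ` (A \<union> B))) - card (\<Union>(nb ` A)) \<le> card (\<Union>((\<lambda>r. nb r - \<Union>(nb ` A)) ` B))"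
    unfolding eq[symmetric] using fin assms(2) A(1) by (intro diff_card_le_card_Diff) auto
  moreover have "card (A \<union> B) \<le> card (\<Union>(nb ` (A \<union> B)))"
    using assms(3) \<open>A \<union> B \<subseteq> R\<close> unfolding hall_condition_def by blast
  moreover have "card (A \<union> B) = card A + card B" using B fin by (intro card_Un_disjoint) auto
  ultimately show "card B \<le> card (\<Union>((\<lambda>r. nb r - \<Union>(nb ` A)) ` B))" using A(2) by linarith
qed

text \<open>Induction on \<open>|R|\<close>: if every proper nonempty subset has a surplus of neighbours, match any
  \<open>r0\<close> to any neighbour and recurse; otherwise split \<open>R\<close> along a subset \<open>A\<close> with exactly \<open>|A|\<close>
  neighbours.\<close>

theorem hall_marriage:
  assumes "finite R" "\<forall>r\<in>R. finite (nb r)" "hall_condition R nb"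
  shows "\<exists>f. inj_on f R \<and> (\<forall>r\<in>R. f r \<in> nb r)"
  using assms
proof (induction "card R" arbitrary: R nb rule: less_induct)
  case less
  show ?case
  proof (cases "\<forall>A. A \<subseteq> R \<and> A \<noteq> {} \<and> A \<noteq> R \<longrightarrow> card A < card (\<Union>(nb ` A))")
    case surplus: True
    show ?thesis
    proof (cases "R = {}")
      case False
      then obtain r0 where r0: "r0 \<in> R" by auto
      have "card {r0} \<le> card (\<Union>(nb ` {r0}))"
        using less.prems(3) r0 unfolding hall_condition_def by blast
      then obtain c0 where c0: "c0 \<in> nb r0" by fastforce
      have "card (R - {r0}) < card R" using less.prems(1) r0 by (rule card_Diff1_less)
      then obtain f where f: "inj_on f (R - {r0})" "\<forall>r\<in>R - {r0}. f r \<in> nb r - {c0}"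
        using less.hyps[of "R - {r0}" "\<lambda>r. nb r - {c0}"] less.prems(1,2)
          hall_condition_remove[OF less.prems(1,2) r0 surplus, of c0]
        by auto
      have "inj_on (f(r0 := c0)) R"
        using f r0 by (auto simp: inj_on_def)
      then show ?thesis using f c0 by (intro exI[of _ "f(r0 := c0)"]) auto
    qed auto
  next
    case False
    then obtain A where A: "A \<subseteq> R" "A \<noteq> {}" "A \<noteq> R" "card (\<Union>(nb ` A)) \<le> card A"
      by (meson not_less)
    have critical: "card (\<Union>(nb ` A)) = card A"
      using A less.prems(3) unfolding hall_condition_def by (simp add: le_antisym)
    have finA: "finite A" using A(1) less.prems(1) finite_subset by auto
    have "card A < card R" using A less.prems(1) by (meson psubsetI psubset_card_mono)
    moreover have "hall_condition A nb" using less.prems(3) A(1) unfolding hall_condition_def by blast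
    ultimately obtain f1 where f1: "inj_on f1 A" "\<forall>r\<in>A. f1 r \<in> nb r"
      using less.hyps[of A nb] less.prems(2) A(1) finA by blast
    have "card (R - A) < card R" using A(1,2) less.prems(1) by (intro psubset_card_mono) auto
    then obtain f2 where f2: "inj_on f2 (R - A)" "\<forall>r\<in>R - A. f2 r \<in> nb r - \<Union>(nb ` A)"
      using less.hyps[of "R - A" "\<lambda>r. nb r - \<Union>(nb ` A)"] less.prems(1,2)
        hall_condition_contract[OF less.prems A(1) critical] by blast
    define f where "f = (\<lambda>r. if r \<in> A then f1 r else f2 r)"
    have "inj_on f (A \<union> (R - A))"
      unfolding inj_on_Un
    proof (intro conjI)
      show "inj_on f A" using f1(1) by (auto simp: f_def inj_on_def)
      show "inj_on f (R - A)" using f2(1) by (auto simp: f_def inj_on_def)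
      show "f ` (A - (R - A)) \<inter> f ` (R - A - A) = {}" using f1(2) f2(2) by (auto simp: f_def)
    qed
    then show ?thesis using A(1) f1(2) f2(2) by (intro exI[of _ f]) (auto simp: f_def Un_absorb1)
  qed
qed

lemma sum_filter_insert_add:
  assumes "finite S"
  shows "(\<Sum>\<tau>\<in>{\<tau>\<in>insert \<sigma> S. P \<tau>}. (if \<tau> \<in> S then m \<tau> else 0) + (if \<tau> = \<sigma> then t else 0))
       = (\<Sum>\<tau>\<in>{\<tau>\<in>S. P \<tau>}. m \<tau>) + (if P \<sigma> then t else (0::real))"
proof -
  have fin: "finite {\<tau>\<in>insert \<sigma> S. P \<tau>}" using assms by auto
  have "(\<Sum>\<tau>\<in>{\<tau>\<in>insert \<sigma> S. P \<tau>}. if \<tau> \<in> S then m \<tau> else 0) = (\<Sum>\<tau>\<in>{\<tau>\<in>S. P \<tau>}. if \<tau> \<in> S then m \<tau> else 0)"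
    by (rule sum.mono_neutral_right) (use fin in auto)
  moreover have "(\<Sum>\<tau>\<in>{\<tau>\<in>insert \<sigma> S. P \<tau>}. if \<tau> = \<sigma> then t else 0) = (if P \<sigma> then t else 0)"
    using fin by (simp add: sum.delta)
  ultimately show ?thesis by (simp add: sum.distrib)
qed

lemma regular_matrix_hall_condition:
  fixes D :: "'a \<Rightarrow> 'b \<Rightarrow> real"
  assumes "finite R" "finite C" "k > 0" "\<forall>r\<in>R. \<forall>c\<in>C. D r c \<ge> 0"
    "\<forall>r\<in>R. (\<Sum>c\<in>C. D r c) = k" "\<forall>c\<in>C. (\<Sum>r\<in>R. D r c) = k"
  shows "hall_condition R (\<lambda>r. {c\<in>C. 0 < D r c})"
  unfolding hall_condition_def
proof (intro allI impI)
  fix A assume A: "A \<subseteq> R"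
  let ?NA = "\<Union>r\<in>A. {c\<in>C. 0 < D r c}"
  have NA: "?NA \<subseteq> C" by auto
  have "(\<Sum>r\<in>A. \<Sum>c\<in>C. D r c) = (\<Sum>r\<in>A. k)" by (rule sum.cong) (use A assms(5) in auto)
  then have "real (card A) * k = (\<Sum>r\<in>A. \<Sum>c\<in>C. D r c)" by simp
  also have "\<dots> = (\<Sum>r\<in>A. \<Sum>c\<in>?NA. D r c)"
  proof (rule sum.cong[OF refl])
    fix r assume r: "r \<in> A"
    show "(\<Sum>c\<in>C. D r c) = (\<Sum>c\<in>?NA. D r c)"
      by (rule sum.mono_neutral_right[OF assms(2) NA]) (use r A assms(4) in force)
  qed
  also have "\<dots> = (\<Sum>c\<in>?NA. \<Sum>r\<in>A. D r c)" by (rule sum.swap)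
  also have "\<dots> \<le> (\<Sum>c\<in>?NA. \<Sum>r\<in>R. D r c)"
    by (intro sum_mono sum_mono2[OF assms(1) A]) (use assms(4) NA in auto)
  also have "\<dots> = real (card ?NA) * k" using assms(6) NA by auto
  finally show "card A \<le> card ?NA" using assms(3) by simp
qed

text \<open>One step of the Birkhoff--von Neumann decomposition: Hall's theorem yields a bijection
  \<open>\<sigma>\<close> inside the support of \<open>D\<close>; subtracting it with the least weight \<open>t\<close> along it keeps \<open>D\<close>
  nonnegative and regular and removes at least one entry from the support.\<close>

lemma regular_matrix_remove_bijection:
  fixes D :: "'a \<Rightarrow> 'b \<Rightarrow> real"
  assumes fin: "finite R" "finite C" "R \<noteq> {}" and "k > 0"
    and nonneg: "\<forall>r\<in>R. \<forall>c\<in>C. D r c \<ge> 0"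
    and rows: "\<forall>r\<in>R. (\<Sum>c\<in>C. D r c) = k" and cols: "\<forall>c\<in>C. (\<Sum>r\<in>R. D r c) = k"
  obtains \<sigma> t where "inj_on \<sigma> R" "\<sigma> ` R \<subseteq> C" "0 < t"
    "\<forall>r\<in>R. \<forall>c\<in>C. 0 \<le> D r c - (if \<sigma> r = c then t else 0)"
    "\<forall>r\<in>R. (\<Sum>c\<in>C. D r c - (if \<sigma> r = c then t else 0)) = k - t"
    "\<forall>c\<in>C. (\<Sum>r\<in>R. D r c - (if \<sigma> r = c then t else 0)) = k - t"
    "card {(r, c). r \<in> R \<and> c \<in> C \<and> D r c - (if \<sigma> r = c then t else 0) \<noteq> 0}
       < card {(r, c). r \<in> R \<and> c \<in> C \<and> D r c \<noteq> 0}"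
proof -
  obtain \<sigma> where \<sigma>: "inj_on \<sigma> R" "\<forall>r\<in>R. \<sigma> r \<in> C \<and> 0 < D r (\<sigma> r)"
    using hall_marriage[OF fin(1) _ regular_matrix_hall_condition[OF fin(1,2) \<open>k > 0\<close> nonneg rows cols]]
      fin(2) by fastforce
  have "real (card R) * k = (\<Sum>r\<in>R. \<Sum>c\<in>C. D r c)" using rows by simp
  also have "\<dots> = (\<Sum>c\<in>C. \<Sum>r\<in>R. D r c)" by (rule sum.swap)
  also have "\<dots> = real (card C) * k" using cols by simp
  finally have "card R = card C" using \<open>k > 0\<close> by simp
  then have bij: "bij_betw \<sigma> R C"
    using \<sigma> fin(2) by (metis bij_betw_def card_image card_subset_eq image_subsetI)
  define t where "t = Min ((\<lambda>r. D r (\<sigma> r)) ` R)"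
  have "t \<in> (\<lambda>r. D r (\<sigma> r)) ` R" unfolding t_def using fin(1,3) by (intro Min_in) auto
  then obtain r0 where r0: "r0 \<in> R" "t = D r0 (\<sigma> r0)" by auto
  have t_le: "\<forall>r\<in>R. t \<le> D r (\<sigma> r)" unfolding t_def using fin(1) by auto
  define D' where "D' r c = D r c - (if \<sigma> r = c then t else 0)" for r c
  have "\<forall>r\<in>R. \<forall>c\<in>C. 0 \<le> D' r c" unfolding D'_def using nonneg t_le by auto
  moreover have "\<forall>r\<in>R. (\<Sum>c\<in>C. D' r c) = k - t"
    using fin(2) rows \<sigma>(2) by (simp add: D'_def sum_subtractf)
  moreover have "\<forall>c\<in>C. (\<Sum>r\<in>R. D' r c) = k - t"
  proof
    fix c assume c: "c \<in> C"
    have "(\<Sum>r\<in>R. if \<sigma> r = c then t else 0) = (\<Sum>c'\<in>C. if c' = c then t else 0)"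
      using sum.reindex_bij_betw[OF bij, of "\<lambda>c'. if c' = c then t else 0"] by simp
    then show "(\<Sum>r\<in>R. D' r c) = k - t" using c fin(2) cols by (simp add: D'_def sum_subtractf)
  qed
  moreover have "card {(r, c). r \<in> R \<and> c \<in> C \<and> D' r c \<noteq> 0} < card {(r, c). r \<in> R \<and> c \<in> C \<and> D r c \<noteq> 0}"
  proof (rule psubset_card_mono)
    show "finite {(r, c). r \<in> R \<and> c \<in> C \<and> D r c \<noteq> 0}"
      by (rule finite_subset[of _ "R \<times> C"]) (use fin in auto)
    have "(r0, \<sigma> r0) \<notin> {(r, c). r \<in> R \<and> c \<in> C \<and> D' r c \<noteq> 0}" using r0 by (simp add: D'_def)
    moreover have "(r0, \<sigma> r0) \<in> {(r, c). r \<in> R \<and> c \<in> C \<and> D r c \<noteq> 0}" using r0 \<sigma>(2) by auto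
    moreover have "{(r, c). r \<in> R \<and> c \<in> C \<and> D' r c \<noteq> 0} \<subseteq> {(r, c). r \<in> R \<and> c \<in> C \<and> D r c \<noteq> 0}"
      using \<sigma>(2) by (auto simp: D'_def)
    ultimately show "{(r, c). r \<in> R \<and> c \<in> C \<and> D' r c \<noteq> 0} \<subset> {(r, c). r \<in> R \<and> c \<in> C \<and> D r c \<noteq> 0}"
      by blast
  qed
  moreover have "\<sigma> ` R \<subseteq> C" "0 < t" using \<sigma>(2) r0 by auto
  ultimately show ?thesis using that[OF \<sigma>(1)] unfolding D'_def by blast
qed

theorem birkhoff_decomposition:
  fixes D :: "'a \<Rightarrow> 'b \<Rightarrow> real"
  assumes "finite R" "finite C" "R \<noteq> {}"
    "\<forall>r\<in>R. \<forall>c\<in>C. D r c \<ge> 0"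
    "\<forall>r\<in>R. (\<Sum>c\<in>C. D r c) = k" "\<forall>c\<in>C. (\<Sum>r\<in>R. D r c) = k"
  shows "\<exists>S \<mu>. finite S \<and> (\<forall>\<sigma>\<in>S. \<mu> \<sigma> \<ge> 0 \<and> inj_on \<sigma> R \<and> \<sigma> ` R \<subseteq> C) \<and>
     (\<Sum>\<sigma>\<in>S. \<mu> \<sigma>) = k \<and> (\<forall>r\<in>R. \<forall>c\<in>C. D r c = (\<Sum>\<sigma>\<in>{\<sigma>\<in>S. \<sigma> r = c}. \<mu> \<sigma>))"
  using assms
proof (induction "card {(r, c). r \<in> R \<and> c \<in> C \<and> D r c \<noteq> 0}" arbitrary: D k rule: less_induct)
  case less
  obtain r1 where "r1 \<in> R" using less.prems(3) by auto
  then have "k \<ge> 0" using less.prems(4,5) by (metis sum_nonneg)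
  show ?case
  proof (cases "k = 0")
    case True
    then have "\<forall>r\<in>R. \<forall>c\<in>C. D r c = 0"
      using less.prems(2,4,5) sum_nonneg_eq_0_iff by (metis (no_types, lifting))
    then show ?thesis using True by (intro exI[of _ "{}"]) auto
  next
    case False
    with \<open>k \<ge> 0\<close> have "k > 0" by simp
    then obtain \<sigma> t where \<sigma>: "inj_on \<sigma> R" "\<sigma> ` R \<subseteq> C" "0 < t"
      and step: "\<forall>r\<in>R. \<forall>c\<in>C. 0 \<le> D r c - (if \<sigma> r = c then t else 0)"
        "\<forall>r\<in>R. (\<Sum>c\<in>C. D r c - (if \<sigma> r = c then t else 0)) = k - t"
        "\<forall>c\<in>C. (\<Sum>r\<in>R. D r c - (if \<sigma> r = c then t else 0)) = k - t"
        "card {(r, c). r \<in> R \<and> c \<in> C \<and> D r c - (if \<sigma> r = c then t else 0) \<noteq> 0}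
           < card {(r, c). r \<in> R \<and> c \<in> C \<and> D r c \<noteq> 0}"
      using regular_matrix_remove_bijection[OF less.prems(1-3) _ less.prems(4-6)] by blast
    obtain S' \<mu>' where S': "finite S'" "\<forall>\<sigma>\<in>S'. \<mu>' \<sigma> \<ge> 0 \<and> inj_on \<sigma> R \<and> \<sigma> ` R \<subseteq> C"
      "(\<Sum>\<sigma>\<in>S'. \<mu>' \<sigma>) = k - t"
      "\<forall>r\<in>R. \<forall>c\<in>C. D r c - (if \<sigma> r = c then t else 0) = (\<Sum>\<sigma>\<in>{\<sigma>\<in>S'. \<sigma> r = c}. \<mu>' \<sigma>)"
      using less.hyps[OF step(4) less.prems(1-3) step(1-3)] by blast
    define \<mu> where "\<mu> \<tau> = (if \<tau> \<in> S' then \<mu>' \<tau> else 0) + (if \<tau> = \<sigma> then t else 0)" for \<tau>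
    have "\<forall>\<tau>\<in>insert \<sigma> S'. \<mu> \<tau> \<ge> 0 \<and> inj_on \<tau> R \<and> \<tau> ` R \<subseteq> C"
      using S'(2) \<sigma> unfolding \<mu>_def by auto
    moreover have "(\<Sum>\<tau>\<in>insert \<sigma> S'. \<mu> \<tau>) = k"
    proof -
      have "(\<Sum>\<tau>\<in>{\<tau>\<in>insert \<sigma> S'. True}. \<mu> \<tau>) = k"
        using sum_filter_insert_add[OF S'(1), where \<sigma>=\<sigma> and P="\<lambda>_. True" and m=\<mu>' and t=t] S'(3)
        unfolding \<mu>_def by simp
      then show ?thesis by (simp only: simp_thms Collect_mem_eq)
    qed
    moreover have "\<forall>r\<in>R. \<forall>c\<in>C. D r c = (\<Sum>\<tau>\<in>{\<tau>\<in>insert \<sigma> S'. \<tau> r = c}. \<mu> \<tau>)"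
    proof (intro ballI)
      fix r c assume "r \<in> R" "c \<in> C"
      then have "D r c - (if \<sigma> r = c then t else 0) = (\<Sum>\<tau>\<in>{\<tau>\<in>S'. \<tau> r = c}. \<mu>' \<tau>)" using S'(4) by blast
      then show "D r c = (\<Sum>\<tau>\<in>{\<tau>\<in>insert \<sigma> S'. \<tau> r = c}. \<mu> \<tau>)"
        using sum_filter_insert_add[OF S'(1), where \<sigma>=\<sigma> and P="\<lambda>\<tau>. \<tau> r = c" and m=\<mu>' and t=t]
        unfolding \<mu>_def by simp
    qed
    ultimately show ?thesis using S'(1) by (intro exI[of _ "insert \<sigma> S'"] exI[of _ \<mu>]) auto
  qed
qed

lemma sum_two_blocks:
  assumes "finite A" "finite B"
  shows "(\<Sum>x\<in>{False} \<times> A \<union> {True} \<times> B. f x) = (\<Sum>a\<in>A. f (False, a)) + (\<Sum>b\<in>B. f (True, b))"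
proof -
  have "(\<Sum>x\<in>{False} \<times> A \<union> {True} \<times> B. f x) = (\<Sum>x\<in>{False} \<times> A. f x) + (\<Sum>x\<in>{True} \<times> B. f x)"
    using assms by (intro sum.union_disjoint) auto
  also have "\<dots> = (\<Sum>a\<in>A. f (False, a)) + (\<Sum>b\<in>B. f (True, b))"
  proof -
    have "{b} \<times> X = Pair b ` X" for b :: bool and X :: "'a set" by auto
    then show ?thesis by (simp add: sum.reindex inj_on_def)
  qed
  finally show ?thesis .
qed

text \<open>A doubly substochastic \<open>z\<close> on \<open>A \<times> B\<close> is the upper left block of the doubly stochastic
  matrix \<open>[[z, diag (1 - row sums)], [diag (1 - column sums), z\<^sup>T]]\<close> on \<open>(A + B) \<times> (B + A)\<close>, whose
  Birkhoff decomposition restricts to a decomposition of \<open>z\<close> into partial matchings.\<close>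

lemma substochastic_matching_decomposition:
  fixes z :: "'a \<Rightarrow> 'a \<Rightarrow> real"
  assumes "finite A" "finite B" "A \<noteq> {}" and nonneg: "\<forall>i\<in>A. \<forall>j\<in>B. 0 \<le> z i j"
    and rows: "\<forall>i\<in>A. (\<Sum>j\<in>B. z i j) \<le> 1" and cols: "\<forall>j\<in>B. (\<Sum>i\<in>A. z i j) \<le> 1"
  obtains S \<mu> where "finite S" "\<forall>\<sigma>\<in>S. 0 \<le> \<mu> \<sigma> \<and> inj_on \<sigma> ({False} \<times> A)" "(\<Sum>\<sigma>\<in>S. \<mu> \<sigma>) = 1"
    "\<forall>i\<in>A. \<forall>j\<in>B. z i j = (\<Sum>\<sigma>\<in>{\<sigma>\<in>S. \<sigma> (False, i) = (False, j)}. \<mu> \<sigma>)"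
proof -
  define rs where "rs i = (\<Sum>j\<in>B. z i j)" for i
  define cs where "cs j = (\<Sum>i\<in>A. z i j)" for j
  define R where "R = {False} \<times> A \<union> {True} \<times> B"
  define C where "C = {False} \<times> B \<union> {True} \<times> A"
  define D where "D r c = (if \<not> fst r \<and> \<not> fst c then z (snd r) (snd c)
     else if \<not> fst r \<and> fst c then (if snd r = snd c then 1 - rs (snd r) else 0)
     else if fst r \<and> \<not> fst c then (if snd r = snd c then 1 - cs (snd r) else 0)
     else z (snd c) (snd r))" for r c
  have D_nonneg: "\<forall>r\<in>R. \<forall>c\<in>C. 0 \<le> D r c"
    unfolding R_def C_def D_def rs_def cs_def using nonneg rows cols by auto
  have D_rows: "\<forall>r\<in>R. (\<Sum>c\<in>C. D r c) = 1"
  proof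
    fix r assume "r \<in> R"
    then consider i where "r = (False, i)" "i \<in> A" | j where "r = (True, j)" "j \<in> B"
      unfolding R_def by auto
    then show "(\<Sum>c\<in>C. D r c) = 1"
      by cases (use assms(1,2) in \<open>simp_all add: C_def sum_two_blocks D_def rs_def cs_def\<close>)
  qed
  have D_cols: "\<forall>c\<in>C. (\<Sum>r\<in>R. D r c) = 1"
  proof
    fix c assume "c \<in> C"
    then consider j where "c = (False, j)" "j \<in> B" | i where "c = (True, i)" "i \<in> A"
      unfolding C_def by auto
    then show "(\<Sum>r\<in>R. D r c) = 1"
      by cases (use assms(1,2) in \<open>simp_all add: R_def sum_two_blocks D_def rs_def cs_def\<close>)
  qed
  have "finite R" "finite C" "R \<noteq> {}" using assms(1-3) unfolding R_def C_def by auto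
  then obtain S \<mu> where S: "finite S" "\<forall>\<sigma>\<in>S. \<mu> \<sigma> \<ge> 0 \<and> inj_on \<sigma> R \<and> \<sigma> ` R \<subseteq> C"
     "(\<Sum>\<sigma>\<in>S. \<mu> \<sigma>) = 1" "\<forall>r\<in>R. \<forall>c\<in>C. D r c = (\<Sum>\<sigma>\<in>{\<sigma>\<in>S. \<sigma> r = c}. \<mu> \<sigma>)"
    using birkhoff_decomposition[OF _ _ _ D_nonneg D_rows D_cols] by blast
  moreover have "\<forall>\<sigma>\<in>S. 0 \<le> \<mu> \<sigma> \<and> inj_on \<sigma> ({False} \<times> A)"
    using S(2) unfolding R_def by (auto intro: inj_on_subset)
  moreover have "\<forall>i\<in>A. \<forall>j\<in>B. z i j = (\<Sum>\<sigma>\<in>{\<sigma>\<in>S. \<sigma> (False, i) = (False, j)}. \<mu> \<sigma>)"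
  proof (intro ballI)
    fix i j assume "i \<in> A" "j \<in> B"
    then have "(False, i) \<in> R" "(False, j) \<in> C" unfolding R_def C_def by auto
    then have "D (False, i) (False, j) = (\<Sum>\<sigma>\<in>{\<sigma>\<in>S. \<sigma> (False, i) = (False, j)}. \<mu> \<sigma>)" using S(4) by blast
    moreover have "D (False, i) (False, j) = z i j" unfolding D_def by simp
    ultimately show "z i j = (\<Sum>\<sigma>\<in>{\<sigma>\<in>S. \<sigma> (False, i) = (False, j)}. \<mu> \<sigma>)" by simp
  qed
  ultimately show ?thesis by (intro that[OF S(1) _ S(3)])
qed

section \<open>Flows in finite digraphs\<close>

definition excess :: "'a set \<Rightarrow> ('a \<Rightarrow> 'a \<Rightarrow> real) \<Rightarrow> 'a \<Rightarrow> real" where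
  "excess V g x = (\<Sum>u\<in>V. g u x) - (\<Sum>v\<in>V. g x v)"

definition is_flow :: "'a set \<Rightarrow> 'a \<Rightarrow> 'a \<Rightarrow> ('a \<Rightarrow> 'a \<Rightarrow> real) \<Rightarrow> ('a \<Rightarrow> 'a \<Rightarrow> real) \<Rightarrow> bool" where
  "is_flow V s t cap g \<longleftrightarrow>
     (\<forall>u\<in>V. \<forall>v\<in>V. 0 \<le> g u v \<and> g u v \<le> cap u v) \<and> (\<forall>x\<in>V - {s, t}. excess V g x = 0)"

text \<open>A step of a walk from \<open>a\<close> to \<open>c\<close> pushes one unit along the edge \<open>(a, c)\<close> if \<open>b\<close> holds and
  otherwise cancels one unit on the reverse edge \<open>(c, a)\<close>.\<close>

definition step_flow :: "bool \<Rightarrow> 'a \<Rightarrow> 'a \<Rightarrow> 'a \<Rightarrow> 'a \<Rightarrow> real" where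
  "step_flow b a c u v =
     (if b then (if a = u \<and> c = v then 1 else 0) else (if c = u \<and> a = v then -1 else 0))"

definition walk_flow :: "(nat \<Rightarrow> bool) \<Rightarrow> 'a list \<Rightarrow> 'a \<Rightarrow> 'a \<Rightarrow> real" where
  "walk_flow fw p u v = (\<Sum>k<length p - 1. step_flow (fw k) (p ! k) (p ! Suc k) u v)"

definition traverses :: "'a list \<Rightarrow> 'a \<Rightarrow> 'a \<Rightarrow> bool" where
  "traverses p u v \<longleftrightarrow> (\<exists>k. Suc k < length p \<and> p ! k = u \<and> p ! Suc k = v)"

lemma excess_add_scaled: "excess V (\<lambda>u v. g u v + c * h u v) x = excess V g x + c * excess V h x"
  unfolding excess_def by (simp add: sum.distrib sum_distrib_left algebra_simps)

lemma excess_sum: "excess V (\<lambda>u v. \<Sum>i\<in>I. h i u v) x = (\<Sum>i\<in>I. excess V (h i) x)"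
  unfolding excess_def by (simp add: sum.swap[of _ V] sum_subtractf)

lemma excess_mult: "excess V (\<lambda>u v. c * h u v) x = c * excess V h x"
  unfolding excess_def by (simp add: sum_distrib_left right_diff_distrib)

lemma excess_step_flow:
  assumes "finite V" "a \<in> V" "c \<in> V"
  shows "excess V (step_flow b a c) x = (if c = x then 1 else 0) - (if a = x then 1 else 0)"
proof (cases b)
  case True
  have "(\<Sum>u\<in>V. step_flow b a c u x) = (if c = x then 1 else 0)"
    using assms True by (simp add: step_flow_def sum.delta' conj_commute)
  moreover have "(\<Sum>v\<in>V. step_flow b a c x v) = (if a = x then 1 else 0)"
    using assms True by (simp add: step_flow_def sum.delta)
  ultimately show ?thesis by (simp add: excess_def)
next
  case False
  have "(\<Sum>u\<in>V. step_flow b a c u x) = (\<Sum>u\<in>V. if c = u then (if a = x then -1 else 0) else 0)"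
    "(\<Sum>v\<in>V. step_flow b a c x v) = (\<Sum>v\<in>V. if a = v then (if c = x then -1 else 0) else 0)"
    using False by (auto intro!: sum.cong simp: step_flow_def)
  then show ?thesis using assms by (simp add: excess_def sum.delta)
qed

lemma excess_walk_flow:
  assumes "finite V" "set p \<subseteq> V" "p \<noteq> []"
  shows "excess V (walk_flow fw p) x = (if last p = x then 1 else 0) - (if hd p = x then 1 else 0)"
proof -
  have "excess V (walk_flow fw p) x = (\<Sum>k<length p - 1. excess V (step_flow (fw k) (p ! k) (p ! Suc k)) x)"
    unfolding walk_flow_def by (rule excess_sum)
  also have "\<dots> = (\<Sum>k<length p - 1. (if p ! Suc k = x then 1 else 0) - (if p ! k = x then 1 else 0))"
    using assms by (intro sum.cong refl excess_step_flow) auto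
  also have "\<dots> = (if p ! (length p - 1) = x then 1 else 0) - (if p ! 0 = x then 1 else 0)"
    by (rule sum_lessThan_telescope[where f = "\<lambda>k. if p ! k = x then 1 else (0::real)"])
  finally show ?thesis using assms(3) by (simp add: hd_conv_nth last_conv_nth)
qed

lemma step_flow_bounds: "-1 \<le> step_flow b a c u v" "step_flow b a c u v \<le> 1"
  unfolding step_flow_def by (cases b; auto)+

lemma walk_flow_bounds:
  "- real (length p - 1) \<le> walk_flow fw p u v" "walk_flow fw p u v \<le> real (length p - 1)"
proof -
  have "(\<Sum>k<length p - 1. -1) \<le> walk_flow fw p u v" "walk_flow fw p u v \<le> (\<Sum>k<length p - 1. 1)"
    unfolding walk_flow_def by (intro sum_mono step_flow_bounds)+
  then show "- real (length p - 1) \<le> walk_flow fw p u v" "walk_flow fw p u v \<le> real (length p - 1)"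
    by simp_all
qed

lemma walk_flow_nonpos:
  assumes "\<forall>k. Suc k < length p \<longrightarrow> \<not> (fw k \<and> p ! k = u \<and> p ! Suc k = v)"
  shows "walk_flow fw p u v \<le> 0"
  unfolding walk_flow_def
proof (intro sum_nonpos)
  fix k assume "k \<in> {..<length p - 1}"
  then have "Suc k < length p" by auto
  then show "step_flow (fw k) (p ! k) (p ! Suc k) u v \<le> 0"
    using assms unfolding step_flow_def by (cases "fw k") auto
qed

lemma walk_flow_nonneg:
  assumes "\<forall>k. Suc k < length p \<longrightarrow> \<not> (\<not> fw k \<and> p ! Suc k = u \<and> p ! k = v)"
  shows "0 \<le> walk_flow fw p u v"
  unfolding walk_flow_def
proof (intro sum_nonneg)
  fix k assume "k \<in> {..<length p - 1}"
  then have "Suc k < length p" by auto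
  then show "0 \<le> step_flow (fw k) (p ! k) (p ! Suc k) u v"
    using assms unfolding step_flow_def by (cases "fw k") auto
qed

lemma walk_flow_forward:
  assumes "distinct p"
  shows "walk_flow (\<lambda>_. True) p u v = (if traverses p u v then 1 else 0)"
proof -
  let ?K = "{k\<in>{..<length p - 1}. p ! k = u \<and> p ! Suc k = v}"
  have "walk_flow (\<lambda>_. True) p u v = real (card ?K)"
    unfolding walk_flow_def step_flow_def if_True by (simp add: sum.inter_filter[symmetric])
  moreover have "card ?K = (if traverses p u v then 1 else 0)"
  proof (cases "traverses p u v")
    case True
    then obtain k0 where k0: "Suc k0 < length p" "p ! k0 = u" "p ! Suc k0 = v" unfolding traverses_def by blast
    have "?K = {k0}"
    proof
      show "?K \<subseteq> {k0}" using k0 assms by (auto simp: nth_eq_iff_index_eq)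
    qed (use k0 in auto)
    then show ?thesis using True by simp
  qed (auto simp: traverses_def)
  ultimately show ?thesis by simp
qed

lemma neg_excess_source_eq_cut:
  assumes "finite V" "\<Omega> \<subseteq> V" "s \<in> \<Omega>" "\<forall>x\<in>\<Omega> - {s}. excess V g x = 0"
  shows "- excess V g s = (\<Sum>i\<in>\<Omega>. \<Sum>j\<in>V - \<Omega>. g i j) - (\<Sum>i\<in>V - \<Omega>. \<Sum>j\<in>\<Omega>. g i j)"
proof -
  have finO: "finite \<Omega>" using assms finite_subset by auto
  have split: "\<And>f. (\<Sum>u\<in>V. f u) = (\<Sum>u\<in>V - \<Omega>. f u) + (\<Sum>u\<in>\<Omega>. f u :: real)"
    using assms(1,2) by (simp add: sum.subset_diff)
  have "(\<Sum>x\<in>\<Omega>. excess V g x) = excess V g s"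
    using finO assms(3,4) by (simp add: sum.remove)
  moreover have "(\<Sum>x\<in>\<Omega>. excess V g x) = (\<Sum>x\<in>\<Omega>. \<Sum>u\<in>V - \<Omega>. g u x) + (\<Sum>x\<in>\<Omega>. \<Sum>u\<in>\<Omega>. g u x)
      - ((\<Sum>x\<in>\<Omega>. \<Sum>v\<in>V - \<Omega>. g x v) + (\<Sum>x\<in>\<Omega>. \<Sum>v\<in>\<Omega>. g x v))"
    unfolding excess_def by (simp add: split sum.distrib sum_subtractf)
  moreover have "(\<Sum>x\<in>\<Omega>. \<Sum>u\<in>\<Omega>. g u x) = (\<Sum>x\<in>\<Omega>. \<Sum>v\<in>\<Omega>. g x v)" by (rule sum.swap)
  moreover have "(\<Sum>x\<in>\<Omega>. \<Sum>u\<in>V - \<Omega>. g u x) = (\<Sum>i\<in>V - \<Omega>. \<Sum>j\<in>\<Omega>. g i j)" by (rule sum.swap)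
  ultimately show ?thesis by simp
qed

lemma flow_value_le_cut:
  assumes "finite V" "\<Omega> \<subseteq> V" "s \<in> \<Omega>" "\<forall>x\<in>\<Omega> - {s}. excess V g x = 0" "\<forall>u\<in>V. \<forall>v\<in>V. 0 \<le> g u v"
  shows "- excess V g s \<le> (\<Sum>i\<in>\<Omega>. \<Sum>j\<in>V - \<Omega>. g i j)"
proof -
  have "0 \<le> (\<Sum>i\<in>V - \<Omega>. \<Sum>j\<in>\<Omega>. g i j)" using assms(2,5) by (intro sum_nonneg) auto
  then show ?thesis using neg_excess_source_eq_cut[OF assms(1-4)] by linarith
qed

lemma rtrancl_distinct_path:
  assumes "(x, y) \<in> R\<^sup>*"
  obtains p where "distinct p" "p \<noteq> []" "hd p = x" "last p = y"
    "\<forall>k. Suc k < length p \<longrightarrow> (p ! k, p ! Suc k) \<in> R"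
proof -
  have "\<exists>p. distinct p \<and> p \<noteq> [] \<and> hd p = x \<and> last p = y \<and>
           (\<forall>k. Suc k < length p \<longrightarrow> (p ! k, p ! Suc k) \<in> R)"
    using assms
  proof (induction rule: converse_rtrancl_induct)
    case base
    then show ?case by (intro exI[of _ "[y]"]) auto
  next
    case (step x z)
    then obtain p where p: "distinct p" "p \<noteq> []" "hd p = z" "last p = y"
        "\<forall>k. Suc k < length p \<longrightarrow> (p ! k, p ! Suc k) \<in> R" by blast
    show ?case
    proof (cases "x \<in> set p")
      case False
      have "\<forall>k. Suc k < length (x # p) \<longrightarrow> ((x # p) ! k, (x # p) ! Suc k) \<in> R"
      proof (intro allI impI)
        fix k assume "Suc k < length (x # p)"
        then show "((x # p) ! k, (x # p) ! Suc k) \<in> R"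
          using step(1) p(2,3,5) by (cases k) (auto simp: hd_conv_nth)
      qed
      then show ?thesis using False p by (intro exI[of _ "x # p"]) auto
    next
      case True
      then obtain as bs where ab: "p = as @ x # bs" by (meson split_list)
      have "\<forall>k. Suc k < length (x # bs) \<longrightarrow> ((x # bs) ! k, (x # bs) ! Suc k) \<in> R"
      proof (intro allI impI)
        fix k assume k: "Suc k < length (x # bs)"
        then have "Suc (length as + k) < length p" using ab by simp
        then have "(p ! (length as + k), p ! Suc (length as + k)) \<in> R" using p(5) by blast
        moreover have "p ! (length as + k) = (x # bs) ! k" "p ! Suc (length as + k) = (x # bs) ! Suc k"
          unfolding ab by (simp_all add: nth_append del: nth_Cons_Suc)
        ultimately show "((x # bs) ! k, (x # bs) ! Suc k) \<in> R" by simp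
      qed
      moreover have "distinct (x # bs)" "last (x # bs) = y" using p(1,4) ab by auto
      ultimately show ?thesis by (intro exI[of _ "x # bs"]) auto
    qed
  qed
  then show ?thesis using that by blast
qed

lemma chain_set_subset:
  assumes "\<forall>k. Suc k < length p \<longrightarrow> (p ! k, p ! Suc k) \<in> R" "R \<subseteq> V \<times> V" "p \<noteq> []" "hd p \<in> V"
  shows "set p \<subseteq> V"
proof
  fix x assume "x \<in> set p"
  then obtain k where k: "k < length p" "p ! k = x" by (auto simp: in_set_conv_nth)
  show "x \<in> V"
  proof (cases k)
    case 0 then show ?thesis using k assms(3,4) by (simp add: hd_conv_nth)
  next
    case (Suc k') then show ?thesis using k assms(1,2) by auto
  qed
qed

definition residual :: "'a set \<Rightarrow> ('a \<Rightarrow> 'a \<Rightarrow> real) \<Rightarrow> ('a \<Rightarrow> 'a \<Rightarrow> real) \<Rightarrow> ('a \<times> 'a) set" where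
  "residual V cap g = {(u, v). u \<in> V \<and> v \<in> V \<and> (g u v < cap u v \<or> 0 < g v u)}"

lemma length_gt_1_if_hd_neq_last:
  assumes "p \<noteq> []" "hd p \<noteq> last p"
  shows "1 < length p"
  using assms by (cases p) (auto split: if_splits)

text \<open>Pushing \<open>\<delta> / m\<close> along each of the \<open>m\<close> steps of an augmenting path changes each edge by at most
  \<open>\<delta>\<close>, the least residual capacity on the path, even if the path reuses an edge.\<close>

lemma augmenting_path_increases_flow:
  assumes V: "finite V" "s \<noteq> t" and fl: "is_flow V s t cap g"
    and p: "p \<noteq> []" "hd p = s" "last p = t" "set p \<subseteq> V"
    and res: "\<forall>k. Suc k < length p \<longrightarrow> (p ! k, p ! Suc k) \<in> residual V cap g"
  shows "\<exists>g'. is_flow V s t cap g' \<and> - excess V g s < - excess V g' s"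
proof -
  define m where "m = length p - 1"
  have m1: "1 \<le> m" unfolding m_def using length_gt_1_if_hd_neq_last[of p] p V(2) by simp
  define fw where "fw = (\<lambda>k. g (p ! k) (p ! Suc k) < cap (p ! k) (p ! Suc k))"
  define r where "r = (\<lambda>k. if fw k then cap (p ! k) (p ! Suc k) - g (p ! k) (p ! Suc k)
                                  else g (p ! Suc k) (p ! k))"
  have r_pos: "0 < r k" if "k < m" for k
  proof -
    have "Suc k < length p" using that unfolding m_def by simp
    then show ?thesis using res unfolding r_def fw_def residual_def by auto
  qed
  define \<delta> where "\<delta> = Min (r ` {..<m})"
  have "\<delta> \<in> r ` {..<m}" unfolding \<delta>_def using m1 by (intro Min_in) (auto simp: lessThan_empty_iff)
  then have "0 < \<delta>" using r_pos by auto
  have \<delta>_le: "k < m \<Longrightarrow> \<delta> \<le> r k" for k unfolding \<delta>_def by simp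
  define \<epsilon> where "\<epsilon> = \<delta> / real m"
  have "0 < \<epsilon>" "\<epsilon> * real m = \<delta>" using \<open>0 < \<delta>\<close> m1 by (simp_all add: \<epsilon>_def)
  define g' where "g' = (\<lambda>u v. g u v + \<epsilon> * walk_flow fw p u v)"
  have bounds: "- (\<epsilon> * real m) \<le> \<epsilon> * walk_flow fw p u v" "\<epsilon> * walk_flow fw p u v \<le> \<epsilon> * real m" for u v
    using mult_left_mono[OF walk_flow_bounds(1), of \<epsilon> p fw u v] mult_left_mono[OF walk_flow_bounds(2), of \<epsilon> fw p u v]
      \<open>0 < \<epsilon>\<close> unfolding m_def by simp_all
  have "0 \<le> g' u v \<and> g' u v \<le> cap u v" if uv: "u \<in> V" "v \<in> V" for u v
  proof
    show "g' u v \<le> cap u v"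
    proof (cases "\<exists>k. Suc k < length p \<and> fw k \<and> p ! k = u \<and> p ! Suc k = v")
      case True
      then obtain k where "Suc k < length p" "fw k" "p ! k = u" "p ! Suc k = v" by blast
      then have "\<delta> \<le> cap u v - g u v" using \<delta>_le[of k] unfolding r_def m_def by simp
      then show ?thesis using bounds(2)[of u v] \<open>\<epsilon> * real m = \<delta>\<close> unfolding g'_def by linarith
    next
      case False
      then have "walk_flow fw p u v \<le> 0" by (intro walk_flow_nonpos) blast
      then have "\<epsilon> * walk_flow fw p u v \<le> 0" using \<open>0 < \<epsilon>\<close> by (simp add: mult_nonneg_nonpos)
      then show ?thesis using fl uv unfolding is_flow_def g'_def by fastforce
    qed
    show "0 \<le> g' u v"
    proof (cases "\<exists>k. Suc k < length p \<and> \<not> fw k \<and> p ! Suc k = u \<and> p ! k = v")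
      case True
      then obtain k where "Suc k < length p" "\<not> fw k" "p ! Suc k = u" "p ! k = v" by blast
      then have "\<delta> \<le> g u v" using \<delta>_le[of k] unfolding r_def m_def by simp
      then show ?thesis using bounds(1)[of u v] \<open>\<epsilon> * real m = \<delta>\<close> unfolding g'_def by linarith
    next
      case False
      then have "0 \<le> walk_flow fw p u v" by (intro walk_flow_nonneg) blast
      then have "0 \<le> \<epsilon> * walk_flow fw p u v" using \<open>0 < \<epsilon>\<close> by simp
      then show ?thesis using fl uv unfolding is_flow_def g'_def by fastforce
    qed
  qed
  moreover have excess_g': "excess V g' x = excess V g x + \<epsilon> * ((if t = x then 1 else 0) - (if s = x then 1 else 0))" for x
    unfolding g'_def excess_add_scaled excess_walk_flow[OF V(1) p(4,1)] p(2,3) ..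
  ultimately have "is_flow V s t cap g'" using fl unfolding is_flow_def by auto
  moreover have "- excess V g s < - excess V g' s" using excess_g'[of s] V(2) \<open>0 < \<epsilon>\<close> by simp
  ultimately show ?thesis by blast
qed

lemma residual_subset: "residual V cap g \<subseteq> V \<times> V"
  unfolding residual_def by auto

theorem max_flow_min_cut:
  assumes V: "finite V" "s \<in> V" "s \<noteq> t" and fl: "is_flow V s t cap g"
    and max: "\<forall>g'. is_flow V s t cap g' \<longrightarrow> - excess V g' s \<le> - excess V g s"
  shows "\<exists>\<Omega>. s \<in> \<Omega> \<and> \<Omega> \<subseteq> V \<and> t \<notin> \<Omega> \<and> - excess V g s = (\<Sum>i\<in>\<Omega>. \<Sum>j\<in>V - \<Omega>. cap i j)"
proof -
  define S where "S = {x. (s, x) \<in> (residual V cap g)\<^sup>*}"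
  have "s \<in> S" unfolding S_def by simp
  have "S \<subseteq> V"
  proof
    fix x assume "x \<in> S"
    then have "(s, x) \<in> (residual V cap g)\<^sup>*" unfolding S_def by simp
    then show "x \<in> V" by (cases rule: rtranclE) (use V(2) in \<open>auto simp: residual_def\<close>)
  qed
  have "t \<notin> S"
  proof
    assume "t \<in> S"
    then have "(s, t) \<in> (residual V cap g)\<^sup>*" unfolding S_def by simp
    then obtain p where p: "distinct p" "p \<noteq> []" "hd p = s" "last p = t"
      "\<forall>k. Suc k < length p \<longrightarrow> (p ! k, p ! Suc k) \<in> residual V cap g"
      by (rule rtrancl_distinct_path)
    have "set p \<subseteq> V" using chain_set_subset[OF p(5) residual_subset p(2)] p(3) V(2) by simp
    then obtain g' where "is_flow V s t cap g'" "- excess V g s < - excess V g' s"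
      using augmenting_path_increases_flow[OF V(1,3) fl p(2-4) _ p(5)] by blast
    then show False using max by fastforce
  qed
  have closed: "(i, j) \<notin> residual V cap g" if "i \<in> S" "j \<notin> S" for i j
  proof
    assume "(i, j) \<in> residual V cap g"
    then have "(s, j) \<in> (residual V cap g)\<^sup>*" using \<open>i \<in> S\<close> unfolding S_def by simp
    then show False using \<open>j \<notin> S\<close> unfolding S_def by simp
  qed
  have "- excess V g s = (\<Sum>i\<in>S. \<Sum>j\<in>V - S. g i j) - (\<Sum>i\<in>V - S. \<Sum>j\<in>S. g i j)"
    using fl \<open>t \<notin> S\<close> \<open>S \<subseteq> V\<close> by (intro neg_excess_source_eq_cut[OF V(1) \<open>S \<subseteq> V\<close> \<open>s \<in> S\<close>])
      (auto simp: is_flow_def)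
  also have "\<dots> = (\<Sum>i\<in>S. \<Sum>j\<in>V - S. cap i j)"
  proof -
    have "g i j = cap i j \<and> g j i = 0" if "i \<in> S" "j \<in> V - S" for i j
    proof -
      have "\<not> g i j < cap i j" "\<not> 0 < g j i"
        using closed[of i j] that \<open>S \<subseteq> V\<close> unfolding residual_def by auto
      moreover have "g i j \<le> cap i j" "0 \<le> g j i" using fl that \<open>S \<subseteq> V\<close> unfolding is_flow_def by auto
      ultimately show ?thesis by simp
    qed
    then show ?thesis by simp
  qed
  finally show ?thesis using \<open>s \<in> S\<close> \<open>S \<subseteq> V\<close> \<open>t \<notin> S\<close> by blast
qed

lemma finite_family_convergent_subseq:
  fixes f :: "nat \<Rightarrow> 'a \<Rightarrow> real"
  assumes "finite A" "\<forall>n. \<forall>x\<in>A. \<bar>f n x\<bar> \<le> B"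
  shows "\<exists>r L. strict_mono r \<and> (\<forall>x\<in>A. (\<lambda>n. f (r n) x) \<longlonglongrightarrow> L x)"
  using assms
proof (induction A rule: finite_induct)
  case empty
  then show ?case by (intro exI[of _ id]) (auto simp: strict_mono_def)
next
  case (insert a A)
  then obtain r L where rL: "strict_mono r" "\<forall>x\<in>A. (\<lambda>n. f (r n) x) \<longlonglongrightarrow> L x" by blast
  obtain r2 where r2: "strict_mono r2" "monoseq (\<lambda>n. f (r (r2 n)) a)"
    using seq_monosub[of "\<lambda>n. f (r n) a"] by (auto simp: o_def)
  have "Bseq (\<lambda>n. f (r (r2 n)) a)" using insert.prems by (intro BseqI'[of _ B]) auto
  then obtain la where la: "(\<lambda>n. f (r (r2 n)) a) \<longlonglongrightarrow> la"
    using r2(2) Bseq_monoseq_convergent convergent_def by blast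
  have "(\<lambda>n. f ((r \<circ> r2) n) x) \<longlonglongrightarrow> (L(a := la)) x" if "x \<in> insert a A" for x
  proof (cases "x = a")
    case False
    then have "((\<lambda>n. f (r n) x) \<circ> r2) \<longlonglongrightarrow> L x" using that rL(2) r2(1) LIMSEQ_subseq_LIMSEQ by auto
    then show ?thesis using False by (simp add: o_def)
  qed (use la in simp)
  moreover have "strict_mono (r \<circ> r2)" using rL(1) r2(1) by (simp add: strict_mono_def)
  ultimately show ?case by blast
qed

lemma flow_value_le_source_capacity:
  assumes "is_flow V s t cap g" "s \<in> V"
  shows "- excess V g s \<le> (\<Sum>v\<in>V. cap s v)"
proof -
  have "- excess V g s \<le> (\<Sum>v\<in>V. g s v)"
    using assms by (simp add: excess_def is_flow_def sum_nonneg)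
  also have "\<dots> \<le> (\<Sum>v\<in>V. cap s v)" using assms by (intro sum_mono) (auto simp: is_flow_def)
  finally show ?thesis .
qed

lemma flow_sequence_convergent_subseq:
  fixes gs :: "nat \<Rightarrow> 'a \<Rightarrow> 'a \<Rightarrow> real"
  assumes V: "finite V" and cap_nonneg: "\<forall>u\<in>V. \<forall>v\<in>V. cap u v \<ge> 0"
    and flows: "\<And>n. is_flow V s t cap (gs n)"
  obtains r g where "strict_mono r" "is_flow V s t cap g"
    "\<And>x. x \<in> V \<Longrightarrow> (\<lambda>n. excess V (gs (r n)) x) \<longlonglongrightarrow> excess V g x"
proof -
  have "\<bar>gs n u v\<bar> \<le> (\<Sum>e\<in>V \<times> V. cap (fst e) (snd e))" if "(u, v) \<in> V \<times> V" for n u v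
  proof -
    have "\<bar>gs n u v\<bar> \<le> cap u v" using flows[of n] that unfolding is_flow_def by auto
    also have "\<dots> \<le> (\<Sum>e\<in>V \<times> V. cap (fst e) (snd e))"
      using member_le_sum[of "(u, v)" "V \<times> V" "\<lambda>e. cap (fst e) (snd e)"] V that cap_nonneg by auto
    finally show ?thesis .
  qed
  then obtain r L where r: "strict_mono r" and L: "\<forall>e\<in>V \<times> V. (\<lambda>n. gs (r n) (fst e) (snd e)) \<longlonglongrightarrow> L e"
    using finite_family_convergent_subseq[of "V \<times> V" "\<lambda>n e. gs n (fst e) (snd e)"] V by force
  define g where "g u v = L (u, v)" for u v
  have conv: "(\<lambda>n. gs (r n) u v) \<longlonglongrightarrow> g u v" if "u \<in> V" "v \<in> V" for u v
    using L that unfolding g_def by force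
  have excess_conv: "(\<lambda>n. excess V (gs (r n)) x) \<longlonglongrightarrow> excess V g x" if "x \<in> V" for x
    unfolding excess_def using that by (intro tendsto_intros conv) auto
  have "is_flow V s t cap g"
    unfolding is_flow_def
  proof (intro conjI ballI)
    fix u v assume uv: "u \<in> V" "v \<in> V"
    show "0 \<le> g u v" using conv[OF uv] flows uv unfolding is_flow_def
      by (intro LIMSEQ_le_const[of "\<lambda>n. gs (r n) u v"]) auto
    show "g u v \<le> cap u v" using conv[OF uv] flows uv unfolding is_flow_def
      by (intro LIMSEQ_le_const2[of "\<lambda>n. gs (r n) u v"]) auto
  next
    fix x assume x: "x \<in> V - {s, t}"
    have "(\<lambda>n. excess V (gs (r n)) x) = (\<lambda>n. 0)" using flows x unfolding is_flow_def by auto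
    then have "(\<lambda>n. 0) \<longlonglongrightarrow> excess V g x" using excess_conv[of x] x by simp
    then show "excess V g x = 0" using LIMSEQ_unique tendsto_const by blast
  qed
  then show ?thesis using that r excess_conv by blast
qed

text \<open>The flows form a compact set, so the supremum of the flow values is attained.\<close>

theorem max_flow_exists:
  assumes V: "finite V" "s \<in> V" and cap_nonneg: "\<forall>u\<in>V. \<forall>v\<in>V. cap u v \<ge> 0"
  obtains g where "is_flow V s t cap g" "\<forall>g'. is_flow V s t cap g' \<longrightarrow> - excess V g' s \<le> - excess V g s"
proof -
  define Vals where "Vals = {- excess V g s | g. is_flow V s t cap g}"
  have "is_flow V s t cap (\<lambda>_ _. 0)" using cap_nonneg by (simp add: is_flow_def excess_def)
  then have ne: "Vals \<noteq> {}" unfolding Vals_def by blast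
  have bdd: "bdd_above Vals"
    unfolding Vals_def by (rule bdd_aboveI) (auto intro: flow_value_le_source_capacity[OF _ V(2)])
  define M where "M = Sup Vals"
  have "\<exists>g. is_flow V s t cap g \<and> M - inverse (real (Suc n)) < - excess V g s" for n
    using less_cSup_iff[OF ne bdd, of "M - inverse (real (Suc n))"] unfolding M_def Vals_def by auto
  then obtain gs where gs: "\<And>n. is_flow V s t cap (gs n)" "\<And>n. M - inverse (real (Suc n)) < - excess V (gs n) s"
    by metis
  obtain r g where r: "strict_mono r" and g: "is_flow V s t cap g"
    and conv: "\<And>x. x \<in> V \<Longrightarrow> (\<lambda>n. excess V (gs (r n)) x) \<longlonglongrightarrow> excess V g x"
    using flow_sequence_convergent_subseq[where gs=gs, OF V(1) cap_nonneg gs(1)] by blast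
  have "M \<le> - excess V g s"
  proof (rule LIMSEQ_le)
    show "(\<lambda>n. M - inverse (real (Suc n))) \<longlonglongrightarrow> M"
      using tendsto_diff[OF tendsto_const LIMSEQ_inverse_real_of_nat] by simp
    show "(\<lambda>n. - excess V (gs (r n)) s) \<longlonglongrightarrow> - excess V g s" using conv[OF V(2)] by (rule tendsto_minus)
    have "inverse (real (Suc (r n))) \<le> inverse (real (Suc n))" for n
      using seq_suble[OF r, of n] by (simp add: le_imp_inverse_le)
    then show "\<exists>N. \<forall>n\<ge>N. M - inverse (real (Suc n)) \<le> - excess V (gs (r n)) s"
      using gs(2) by (meson diff_left_mono less_imp_le order.trans)
  qed
  moreover have "- excess V g' s \<le> M" if "is_flow V s t cap g'" for g'
    unfolding M_def Vals_def using bdd that Vals_def by (auto intro: cSup_upper)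
  ultimately show ?thesis using that g by force
qed

definition flow_support :: "'a set \<Rightarrow> ('a \<Rightarrow> 'a \<Rightarrow> real) \<Rightarrow> ('a \<times> 'a) set" where
  "flow_support V g = {(u, v). u \<in> V \<and> v \<in> V \<and> 0 < g u v}"

lemma positive_flow_reaches_sink:
  assumes V: "finite V" "s \<in> V" and nonneg: "\<forall>u\<in>V. \<forall>v\<in>V. 0 \<le> g u v"
    and cons: "\<forall>x\<in>V - {s, t}. excess V g x = 0" and pos: "0 < - excess V g s"
  shows "(s, t) \<in> (flow_support V g)\<^sup>*"
proof (rule ccontr)
  assume "(s, t) \<notin> (flow_support V g)\<^sup>*"
  define T where "T = {x. (s, x) \<in> (flow_support V g)\<^sup>*}"
  have "s \<in> T" "t \<notin> T" unfolding T_def using \<open>(s, t) \<notin> _\<close> by auto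
  have "T \<subseteq> V"
  proof
    fix x assume "x \<in> T"
    then have "(s, x) \<in> (flow_support V g)\<^sup>*" unfolding T_def by simp
    then show "x \<in> V" by (cases rule: rtranclE) (use V(2) in \<open>auto simp: flow_support_def\<close>)
  qed
  have "g i j = 0" if "i \<in> T" "j \<in> V - T" for i j
  proof -
    have "(i, j) \<notin> flow_support V g"
    proof
      assume "(i, j) \<in> flow_support V g"
      then have "(s, j) \<in> (flow_support V g)\<^sup>*" using \<open>i \<in> T\<close> unfolding T_def by simp
      then show False using that(2) unfolding T_def by simp
    qed
    then show ?thesis using that nonneg \<open>T \<subseteq> V\<close> unfolding flow_support_def by force
  qed
  then have "(\<Sum>i\<in>T. \<Sum>j\<in>V - T. g i j) = 0" by simp
  moreover have "- excess V g s = (\<Sum>i\<in>T. \<Sum>j\<in>V - T. g i j) - (\<Sum>i\<in>V - T. \<Sum>j\<in>T. g i j)"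
    using cons \<open>t \<notin> T\<close> \<open>T \<subseteq> V\<close> by (intro neg_excess_source_eq_cut[OF V(1) \<open>T \<subseteq> V\<close> \<open>s \<in> T\<close>]) auto
  ultimately have "- excess V g s = - (\<Sum>i\<in>V - T. \<Sum>j\<in>T. g i j)" by simp
  also have "\<dots> \<le> 0"
    using nonneg \<open>T \<subseteq> V\<close> by (simp, intro sum_nonneg) (auto simp: subset_eq)
  finally show False using pos by simp
qed

lemma positive_flow_remove_path:
  assumes V: "finite V" "s \<in> V" "s \<noteq> t"
    and nonneg: "\<forall>u\<in>V. \<forall>v\<in>V. 0 \<le> g u v" and cons: "\<forall>x\<in>V - {s, t}. excess V g x = 0"
    and pos: "0 < - excess V g s"
  obtains p \<delta> g' where "distinct p" "p \<noteq> []" "hd p = s" "last p = t"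
    "\<forall>k. Suc k < length p \<longrightarrow> (p ! k, p ! Suc k) \<in> flow_support V g" "0 < \<delta>"
    "\<forall>u v. g' u v = g u v - (if traverses p u v then \<delta> else 0)"
    "\<forall>u\<in>V. \<forall>v\<in>V. 0 \<le> g' u v" "\<forall>x\<in>V - {s, t}. excess V g' x = 0"
    "- excess V g' s = - excess V g s - \<delta>" "flow_support V g' \<subset> flow_support V g"
proof -
  obtain p where p: "distinct p" "p \<noteq> []" "hd p = s" "last p = t"
    "\<forall>k. Suc k < length p \<longrightarrow> (p ! k, p ! Suc k) \<in> flow_support V g"
    using rtrancl_distinct_path[OF positive_flow_reaches_sink[OF V(1,2) nonneg cons pos]] by blast
  have "set p \<subseteq> V" using chain_set_subset[OF p(5) _ p(2)] p(3) V(2) by (auto simp: flow_support_def)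
  define m where "m = length p - 1"
  have "1 \<le> m" unfolding m_def using length_gt_1_if_hd_neq_last[of p] p V(3) by simp
  define \<delta> where "\<delta> = Min ((\<lambda>k. g (p ! k) (p ! Suc k)) ` {..<m})"
  have "\<delta> \<in> (\<lambda>k. g (p ! k) (p ! Suc k)) ` {..<m}"
    unfolding \<delta>_def using \<open>1 \<le> m\<close> by (intro Min_in) (auto simp: lessThan_empty_iff)
  then obtain k0 where "k0 < m" "\<delta> = g (p ! k0) (p ! Suc k0)" by auto
  then have k0: "Suc k0 < length p" "\<delta> = g (p ! k0) (p ! Suc k0)" unfolding m_def by auto
  have "0 < \<delta>" using k0 p(5) unfolding flow_support_def by auto
  have \<delta>_le: "\<delta> \<le> g u v" if "traverses p u v" for u v
    using that unfolding traverses_def \<delta>_def m_def by auto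
  define g' where "g' u v = g u v + (- \<delta>) * walk_flow (\<lambda>_. True) p u v" for u v
  have g'_eq: "\<forall>u v. g' u v = g u v - (if traverses p u v then \<delta> else 0)"
    unfolding g'_def walk_flow_forward[OF p(1)] by simp
  have excess_g': "excess V g' x = excess V g x - \<delta> * ((if t = x then 1 else 0) - (if s = x then 1 else 0))" for x
    unfolding g'_def excess_add_scaled excess_walk_flow[OF V(1) \<open>set p \<subseteq> V\<close> p(2)] p(3,4) by simp
  have "flow_support V g' \<subset> flow_support V g"
  proof
    show "flow_support V g' \<subseteq> flow_support V g"
      using \<open>0 < \<delta>\<close> g'_eq unfolding flow_support_def by auto
    have "traverses p (p ! k0) (p ! Suc k0)" using k0(1) unfolding traverses_def by blast
    then have "(p ! k0, p ! Suc k0) \<notin> flow_support V g'" using k0(2) g'_eq unfolding flow_support_def by simp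
    moreover have "(p ! k0, p ! Suc k0) \<in> flow_support V g" using p(5) k0(1) by blast
    ultimately show "flow_support V g' \<noteq> flow_support V g" by blast
  qed
  moreover have "\<forall>u\<in>V. \<forall>v\<in>V. 0 \<le> g' u v" using nonneg \<delta>_le g'_eq by force
  moreover have "\<forall>x\<in>V - {s, t}. excess V g' x = 0" using cons excess_g' by auto
  moreover have "- excess V g' s = - excess V g s - \<delta>" using excess_g'[of s] V(3) by simp
  ultimately show ?thesis using that[OF p \<open>0 < \<delta>\<close> g'_eq] by blast
qed

theorem flow_path_decomposition:
  assumes V: "finite V" "s \<in> V" "s \<noteq> t"
    and "\<forall>u\<in>V. \<forall>v\<in>V. 0 \<le> g u v" "\<forall>x\<in>V - {s, t}. excess V g x = 0"
  obtains P a where "finite P"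
    "\<forall>p\<in>P. distinct p \<and> p \<noteq> [] \<and> hd p = s \<and> last p = t \<and> 0 \<le> a p \<and>
       (\<forall>k. Suc k < length p \<longrightarrow> (p ! k, p ! Suc k) \<in> flow_support V g)"
    "- excess V g s \<le> (\<Sum>p\<in>P. a p)"
    "\<forall>u\<in>V. \<forall>v\<in>V. (\<Sum>p\<in>{p\<in>P. traverses p u v}. a p) \<le> g u v"
proof -
  have "\<exists>P a. finite P \<and>
    (\<forall>p\<in>P. distinct p \<and> p \<noteq> [] \<and> hd p = s \<and> last p = t \<and> 0 \<le> a p \<and>
       (\<forall>k. Suc k < length p \<longrightarrow> (p ! k, p ! Suc k) \<in> flow_support V g)) \<and>
    - excess V g s \<le> (\<Sum>p\<in>P. a p) \<and>
    (\<forall>u\<in>V. \<forall>v\<in>V. (\<Sum>p\<in>{p\<in>P. traverses p u v}. a p) \<le> g u v)"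
    using assms(4,5)
  proof (induction "card (flow_support V g)" arbitrary: g rule: less_induct)
    case less
    show ?case
    proof (cases "0 < - excess V g s")
      case False
      then show ?thesis using less.prems(1) by (intro exI[of _ "{}"]) auto
    next
      case True
      then obtain p \<delta> g' where p: "distinct p" "p \<noteq> []" "hd p = s" "last p = t"
        "\<forall>k. Suc k < length p \<longrightarrow> (p ! k, p ! Suc k) \<in> flow_support V g" "0 < \<delta>"
        and g': "\<forall>u v. g' u v = g u v - (if traverses p u v then \<delta> else 0)"
          "\<forall>u\<in>V. \<forall>v\<in>V. 0 \<le> g' u v" "\<forall>x\<in>V - {s, t}. excess V g' x = 0"
          "- excess V g' s = - excess V g s - \<delta>" "flow_support V g' \<subset> flow_support V g"
        using positive_flow_remove_path[OF V less.prems] by blast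
      have "finite (flow_support V g)"
        by (rule finite_subset[of _ "V \<times> V"]) (use V(1) in \<open>auto simp: flow_support_def\<close>)
      then have "card (flow_support V g') < card (flow_support V g)" using g'(5) by (rule psubset_card_mono)
      then obtain P' a' where P': "finite P'"
        "\<forall>q\<in>P'. distinct q \<and> q \<noteq> [] \<and> hd q = s \<and> last q = t \<and> 0 \<le> a' q \<and>
           (\<forall>k. Suc k < length q \<longrightarrow> (q ! k, q ! Suc k) \<in> flow_support V g')"
        "- excess V g' s \<le> (\<Sum>q\<in>P'. a' q)"
        "\<forall>u\<in>V. \<forall>v\<in>V. (\<Sum>q\<in>{q\<in>P'. traverses q u v}. a' q) \<le> g' u v"
        using less.hyps[of g'] g'(2,3) by blast
      define a where "a q = (if q \<in> P' then a' q else 0) + (if q = p then \<delta> else 0)" for q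
      have "\<forall>q\<in>insert p P'. distinct q \<and> q \<noteq> [] \<and> hd q = s \<and> last q = t \<and> 0 \<le> a q \<and>
           (\<forall>k. Suc k < length q \<longrightarrow> (q ! k, q ! Suc k) \<in> flow_support V g)"
      proof
        fix q assume "q \<in> insert p P'"
        moreover have "0 \<le> a q" using P'(2) \<open>0 < \<delta>\<close> unfolding a_def by auto
        ultimately show "distinct q \<and> q \<noteq> [] \<and> hd q = s \<and> last q = t \<and> 0 \<le> a q \<and>
           (\<forall>k. Suc k < length q \<longrightarrow> (q ! k, q ! Suc k) \<in> flow_support V g)"
          using P'(2) p g'(5) by blast
      qed
      moreover have "- excess V g s \<le> (\<Sum>q\<in>insert p P'. a q)"
      proof -
        have "(\<Sum>q\<in>{q\<in>insert p P'. True}. a q) = (\<Sum>q\<in>P'. a' q) + \<delta>"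
          using sum_filter_insert_add[OF P'(1), where \<sigma>=p and P="\<lambda>_. True" and m=a' and t=\<delta>]
          unfolding a_def by simp
        then show ?thesis using P'(3) g'(4) by (simp only: simp_thms Collect_mem_eq)
      qed
      moreover have "\<forall>u\<in>V. \<forall>v\<in>V. (\<Sum>q\<in>{q\<in>insert p P'. traverses q u v}. a q) \<le> g u v"
      proof (intro ballI)
        fix u v assume uv: "u \<in> V" "v \<in> V"
        have "(\<Sum>q\<in>{q\<in>insert p P'. traverses q u v}. a q)
            = (\<Sum>q\<in>{q\<in>P'. traverses q u v}. a' q) + (if traverses p u v then \<delta> else 0)"
          unfolding a_def by (rule sum_filter_insert_add[OF P'(1)])
        also have "\<dots> \<le> g u v" using P'(4) uv g'(1) by fastforce
        finally show "(\<Sum>q\<in>{q\<in>insert p P'. traverses q u v}. a q) \<le> g u v" .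
      qed
      ultimately show ?thesis using P'(1) by (intro exI[of _ "insert p P'"] exI[of _ a]) auto
    qed
  qed
  then show ?thesis using that by blast
qed

section \<open>FD states and link activations\<close>

lemma finite_bounded_set_families:
  assumes "finite X"
  shows "finite {f :: nat \<Rightarrow> 'a set. \<forall>i. f i \<subseteq> X \<and> (K < i \<longrightarrow> f i = {})}"
proof -
  let ?F = "{f :: nat \<Rightarrow> 'a set. \<forall>i. f i \<subseteq> X \<and> (K < i \<longrightarrow> f i = {})}"
  have "inj (\<lambda>f :: nat \<Rightarrow> 'a set. {(i, j). j \<in> f i})" by (auto simp: inj_def fun_eq_iff)
  moreover have "(\<lambda>f. {(i, j). j \<in> f i}) ` ?F \<subseteq> Pow ({..K} \<times> X)"
    by (auto simp: not_le[symmetric])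
  moreover have "finite (Pow ({..K} \<times> X))" using assms by simp
  ultimately show ?thesis by (meson finite_imageD finite_subset inj_on_subset subset_UNIV)
qed

lemma fd_stateD:
  assumes "s \<in> fd_states N"
  shows "fst s i \<subseteq> {0..N+1} \<and> card (fst s i) \<le> 1 \<and> snd s i \<subseteq> {0..N+1} \<and> card (snd s i) \<le> 1"
    and "N + 1 < i \<Longrightarrow> fst s i = {} \<and> snd s i = {}"
proof -
  obtain st sr where s: "s = (st, sr)" by fastforce
  have "\<forall>i\<le>N + 1. st i \<subseteq> {1..N+1} - {i} \<and> card (st i) \<le> 1 \<and> sr i \<subseteq> {0..N} - {i} \<and> card (sr i) \<le> 1"
    "\<forall>i>N + 1. st i = {} \<and> sr i = {}"
    using assms unfolding s fd_states_def by simp_all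
  then show "fst s i \<subseteq> {0..N+1} \<and> card (fst s i) \<le> 1 \<and> snd s i \<subseteq> {0..N+1} \<and> card (snd s i) \<le> 1"
    "N + 1 < i \<Longrightarrow> fst s i = {} \<and> snd s i = {}"
    unfolding s by (cases "i \<le> N + 1"; force)+
qed

lemma finite_fd_states: "finite (fd_states N)"
proof -
  let ?F = "{f :: nat \<Rightarrow> nat set. \<forall>i. f i \<subseteq> {0..N+1} \<and> (N + 1 < i \<longrightarrow> f i = {})}"
  have "fd_states N \<subseteq> ?F \<times> ?F"
  proof
    fix s assume "s \<in> fd_states N"
    then have "fst s \<in> ?F" "snd s \<in> ?F" using fd_stateD by blast+
    then show "s \<in> ?F \<times> ?F" by (simp add: mem_Times_iff)
  qed
  moreover have "finite (?F \<times> ?F)" using finite_bounded_set_families[of "{0..N+1}"] by simp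
  ultimately show ?thesis by (rule finite_subset)
qed

lemma fd_state_card_out_le_1:
  assumes "s \<in> fd_states N"
  shows "card {j \<in> J. link_active s i j} \<le> 1"
proof -
  have "card {j \<in> J. link_active s i j} \<le> card (fst s i)"
    using fd_stateD(1)[OF assms, of i] finite_subset
    by (intro card_mono) (auto simp: link_active_def)
  then show ?thesis using fd_stateD(1)[OF assms, of i] by simp
qed

lemma fd_state_card_in_le_1:
  assumes "s \<in> fd_states N"
  shows "card {i \<in> I. link_active s i j} \<le> 1"
proof -
  have "card {i \<in> I. link_active s i j} \<le> card (snd s j)"
    using fd_stateD(1)[OF assms, of j] finite_subset
    by (intro card_mono) (auto simp: link_active_def)
  then show ?thesis using fd_stateD(1)[OF assms, of j] by simp
qed

definition link_activation :: "nat \<Rightarrow> (state \<Rightarrow> real) \<Rightarrow> nat \<Rightarrow> nat \<Rightarrow> real" where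
  "link_activation N lam i j = (\<Sum>s \<in> {s \<in> fd_states N. link_active s i j}. lam s)"

lemma cut_value_link_activation:
  "cut_value N ell lam \<Omega> = (\<Sum>i\<in>\<Omega>. \<Sum>j\<in>{0..N+1} - \<Omega>. link_activation N lam i j * ell j i)"
  unfolding cut_value_def link_activation_def by simp

lemma link_activation_nonneg: "prob_vector N lam \<Longrightarrow> 0 \<le> link_activation N lam i j"
  unfolding link_activation_def prob_vector_def by (intro sum_nonneg) auto

lemma sum_prob_vector_le_1:
  assumes "prob_vector N lam" "finite J" "\<forall>s\<in>fd_states N. card {j \<in> J. Q s j} \<le> 1"
  shows "(\<Sum>j\<in>J. \<Sum>s\<in>{s\<in>fd_states N. Q s j}. lam s) \<le> 1"
proof -
  have "(\<Sum>j\<in>J. \<Sum>s\<in>{s\<in>fd_states N. Q s j}. lam s) = (\<Sum>s\<in>fd_states N. real (card {j \<in> J. Q s j}) * lam s)"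
    using assms(2) finite_fd_states by (subst sum.swap_restrict) auto
  also have "\<dots> \<le> (\<Sum>s\<in>fd_states N. lam s)"
    using assms(1,3) unfolding prob_vector_def by (intro sum_mono mult_left_le_one_le) auto
  also have "\<dots> = 1" using assms(1) unfolding prob_vector_def by simp
  finally show ?thesis .
qed

lemma sum_link_activation_out_le_1:
  "prob_vector N lam \<Longrightarrow> finite J \<Longrightarrow> (\<Sum>j\<in>J. link_activation N lam i j) \<le> 1"
  unfolding link_activation_def by (intro sum_prob_vector_le_1 ballI fd_state_card_out_le_1)

lemma sum_link_activation_in_le_1:
  "prob_vector N lam \<Longrightarrow> finite I \<Longrightarrow> (\<Sum>i\<in>I. link_activation N lam i j) \<le> 1"
  unfolding link_activation_def by (intro sum_prob_vector_le_1 ballI fd_state_card_in_le_1)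

lemma link_activation_le_1: "prob_vector N lam \<Longrightarrow> link_activation N lam i j \<le> 1"
  using sum_link_activation_out_le_1[of N lam "{j}" i] by simp

lemma prob_vector_exists: "\<exists>lam. prob_vector N lam"
proof -
  have "((\<lambda>_. {}), (\<lambda>_. {})) \<in> fd_states N" unfolding fd_states_def by auto
  then show ?thesis unfolding prob_vector_def
    by (intro exI[of _ "\<lambda>s. if s = ((\<lambda>_. {}), (\<lambda>_. {})) then 1 else 0"]) (simp add: finite_fd_states sum.delta)
qed

lemma cuts_finite_nonempty: "finite (cuts N)" "{0} \<in> cuts N"
  unfolding cuts_def by (rule finite_subset[of _ "Pow {0..N}"]) auto

definition matching_state :: "nat \<Rightarrow> (bool \<times> nat \<Rightarrow> bool \<times> nat) \<Rightarrow> state" where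
  "matching_state N \<sigma> =
     ((\<lambda>i. {j. i \<le> N \<and> 1 \<le> j \<and> j \<le> N + 1 \<and> j \<noteq> i \<and> \<sigma> (False, i) = (False, j)}),
      (\<lambda>j. {i. i \<le> N \<and> 1 \<le> j \<and> j \<le> N + 1 \<and> j \<noteq> i \<and> \<sigma> (False, i) = (False, j)}))"

lemma link_active_matching_state:
  "link_active (matching_state N \<sigma>) i j \<longleftrightarrow> i \<le> N \<and> 1 \<le> j \<and> j \<le> N + 1 \<and> j \<noteq> i \<and> \<sigma> (False, i) = (False, j)"
  unfolding link_active_def matching_state_def by auto

lemma matching_state_in_fd_states:
  assumes "inj_on \<sigma> ({False} \<times> {0..N})"
  shows "matching_state N \<sigma> \<in> fd_states N"
proof -
  define M where "M i j \<longleftrightarrow> i \<le> N \<and> 1 \<le> j \<and> j \<le> N + 1 \<and> j \<noteq> i \<and> \<sigma> (False, i) = (False, j)" for i j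
  have "card {j. M i j} \<le> 1" for i
  proof -
    have "{j. M i j} \<subseteq> {snd (\<sigma> (False, i))}" unfolding M_def by auto
    then show ?thesis using card_mono[of "{snd (\<sigma> (False, i))}" "{j. M i j}"] by simp
  qed
  moreover have "card {i. M i j} \<le> 1" for j
  proof -
    have "finite {i. M i j}" by (rule finite_subset[of _ "{0..N}"]) (auto simp: M_def)
    moreover have "i1 = i2" if "M i1 j" "M i2 j" for i1 i2
    proof -
      have "\<sigma> (False, i1) = \<sigma> (False, i2)" "(False, i1) \<in> {False} \<times> {0..N}" "(False, i2) \<in> {False} \<times> {0..N}"
        using that unfolding M_def by auto
      then show ?thesis using inj_onD[OF assms] by blast
    qed
    ultimately show ?thesis by (auto simp: card_le_Suc0_iff_eq)
  qed
  moreover have "{j. M i j} \<subseteq> {1..N+1} - {i}" "{i'. M i' i} \<subseteq> {0..N} - {i}" for i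
    unfolding M_def by auto
  moreover have "{j. M i j} = {} \<and> {i'. M i' i} = {}" if "N + 1 < i" for i
    using that unfolding M_def by auto
  moreover have "{i. M i 0} = {}" "{j. M (N + 1) j} = {}" unfolding M_def by auto
  moreover have "matching_state N \<sigma> = ((\<lambda>i. {j. M i j}), (\<lambda>j. {i. M i j}))"
    unfolding matching_state_def M_def by simp
  ultimately show ?thesis unfolding fd_states_def by simp
qed

lemma prob_vector_with_link_activation:
  fixes z :: "nat \<Rightarrow> nat \<Rightarrow> real"
  assumes nonneg: "\<forall>i\<in>{0..N}. \<forall>j\<in>{1..N+1}. 0 \<le> z i j"
    and rows: "\<forall>i\<in>{0..N}. (\<Sum>j\<in>{1..N+1}. z i j) \<le> 1"
    and cols: "\<forall>j\<in>{1..N+1}. (\<Sum>i\<in>{0..N}. z i j) \<le> 1"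
  obtains lam where "prob_vector N lam"
    "\<forall>i\<in>{0..N}. \<forall>j\<in>{1..N+1}. i \<noteq> j \<longrightarrow> link_activation N lam i j = z i j"
proof -
  obtain S \<mu> where S: "finite S" "\<forall>\<sigma>\<in>S. 0 \<le> \<mu> \<sigma> \<and> inj_on \<sigma> ({False} \<times> {0..N})" "(\<Sum>\<sigma>\<in>S. \<mu> \<sigma>) = 1"
    "\<forall>i\<in>{0..N}. \<forall>j\<in>{1..N+1}. z i j = (\<Sum>\<sigma>\<in>{\<sigma>\<in>S. \<sigma> (False, i) = (False, j)}. \<mu> \<sigma>)"
    using substochastic_matching_decomposition[OF _ _ _ nonneg rows cols] by auto
  have states: "\<forall>\<sigma>\<in>S. matching_state N \<sigma> \<in> fd_states N" using S(2) matching_state_in_fd_states by blast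
  define lam where "lam s = (\<Sum>\<sigma>\<in>{\<sigma>\<in>S. matching_state N \<sigma> = s}. \<mu> \<sigma>)" for s
  have "prob_vector N lam"
    unfolding prob_vector_def
  proof
    show "\<forall>s\<in>fd_states N. 0 \<le> lam s" unfolding lam_def using S(2) by (auto intro: sum_nonneg)
    show "(\<Sum>s\<in>fd_states N. lam s) = 1"
      unfolding lam_def using sum.group[OF S(1) finite_fd_states, where g="matching_state N" and h=\<mu>] states S(3) by auto
  qed
  moreover have "link_activation N lam i j = z i j" if "i \<in> {0..N}" "j \<in> {1..N+1}" "i \<noteq> j" for i j
  proof -
    define S' where "S' = {\<sigma>\<in>S. link_active (matching_state N \<sigma>) i j}"
    have "link_activation N lam i j
        = (\<Sum>s\<in>{s\<in>fd_states N. link_active s i j}. \<Sum>\<sigma>\<in>{\<sigma>\<in>S'. matching_state N \<sigma> = s}. \<mu> \<sigma>)"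
      unfolding link_activation_def lam_def S'_def by (intro sum.cong refl) auto
    also have "\<dots> = (\<Sum>\<sigma>\<in>S'. \<mu> \<sigma>)"
      by (rule sum.group) (use S(1) finite_fd_states states S'_def in auto)
    also have "\<dots> = (\<Sum>\<sigma>\<in>{\<sigma>\<in>S. \<sigma> (False, i) = (False, j)}. \<mu> \<sigma>)"
      unfolding S'_def link_active_matching_state using that by (intro sum.cong) auto
    finally show ?thesis using S(4) that by simp
  qed
  ultimately show ?thesis using that by blast
qed

section \<open>Paths of the network\<close>

lemma traverses_set: "traverses p u v \<Longrightarrow> u \<in> set p \<and> v \<in> set p"
  unfolding traverses_def by (metis Suc_lessD nth_mem)

lemma traverses_iff_nx:
  assumes "distinct p"
  shows "traverses p i j \<longleftrightarrow> i \<in> set p \<and> i \<noteq> last p \<and> j = nx p i"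
proof -
  have nx: "nx p (p ! k) = p ! Suc k" if "Suc k < length p" for k
    unfolding nx_def using that assms by (intro the_equality) (auto simp: nth_eq_iff_index_eq)
  show ?thesis
  proof
    assume "traverses p i j"
    then obtain k where k: "Suc k < length p" "p ! k = i" "p ! Suc k = j" unfolding traverses_def by blast
    moreover have "last p = p ! (length p - 1)" using k(1) last_conv_nth[of p] by fastforce
    moreover have "p ! k \<noteq> p ! (length p - 1)" using k(1) assms by (simp add: nth_eq_iff_index_eq)
    ultimately have "i \<noteq> last p" using k(2) by simp
    then show "i \<in> set p \<and> i \<noteq> last p \<and> j = nx p i" using k nx[of k] by auto
  next
    assume i: "i \<in> set p \<and> i \<noteq> last p \<and> j = nx p i"
    then obtain k where k: "k < length p" "p ! k = i" by (auto simp: in_set_conv_nth)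
    then have "Suc k < length p" using i by (metis Suc_lessI last_conv_nth list.size(3) not_less0 diff_Suc_1)
    then show "traverses p i j" using k i nx[of k] unfolding traverses_def by auto
  qed
qed

lemma traverses_iff_pr:
  assumes "distinct p"
  shows "traverses p i j \<longleftrightarrow> j \<in> set p \<and> j \<noteq> hd p \<and> i = pr p j"
proof -
  have pr: "pr p (p ! Suc k) = p ! k" if "Suc k < length p" for k
    unfolding pr_def using that assms by (intro the_equality) (auto simp: nth_eq_iff_index_eq)
  show ?thesis
  proof
    assume "traverses p i j"
    then obtain k where k: "Suc k < length p" "p ! k = i" "p ! Suc k = j" unfolding traverses_def by blast
    moreover have "hd p = p ! 0" using k(1) hd_conv_nth[of p] by fastforce
    moreover have "p ! Suc k \<noteq> p ! 0" using k(1) nth_eq_iff_index_eq[OF assms, of "Suc k" 0] by fastforce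
    ultimately have "j \<noteq> hd p" using k(3) by simp
    then show "j \<in> set p \<and> j \<noteq> hd p \<and> i = pr p j" using k pr[of k] by auto
  next
    assume j: "j \<in> set p \<and> j \<noteq> hd p \<and> i = pr p j"
    then obtain k where k: "k < length p" "p ! k = j" by (auto simp: in_set_conv_nth)
    then obtain k' where "k = Suc k'" using j by (cases k) (auto simp: hd_conv_nth)
    then show "traverses p i j" using k j pr[of k'] unfolding traverses_def by auto
  qed
qed

lemma sum_nx_eq_sum_traverses:
  assumes "finite P" "finite V" "\<forall>p\<in>P. distinct p \<and> set p \<subseteq> V \<and> i \<noteq> last p"
  shows "(\<Sum>p\<in>{p\<in>P. i \<in> set p}. G p (nx p i)) = (\<Sum>j\<in>V. \<Sum>p\<in>{p\<in>P. traverses p i j}. G p j)"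
proof -
  have "(\<Sum>j\<in>V. \<Sum>p\<in>{p\<in>P. traverses p i j}. G p j) = (\<Sum>p\<in>P. \<Sum>j\<in>{j\<in>V. traverses p i j}. G p j)"
    by (rule sum.swap_restrict) (use assms(1,2) in auto)
  also have "\<dots> = (\<Sum>p\<in>P. if i \<in> set p then G p (nx p i) else 0)"
  proof (rule sum.cong[OF refl])
    fix p assume p: "p \<in> P"
    have p': "distinct p" "set p \<subseteq> V" "i \<noteq> last p" using p assms(3) by auto
    then have "traverses p i j \<longleftrightarrow> i \<in> set p \<and> j = nx p i" for j using traverses_iff_nx by simp
    moreover have "traverses p i (nx p i) \<Longrightarrow> nx p i \<in> V" using p'(2) traverses_set[of p i "nx p i"] by auto
    ultimately have "{j\<in>V. traverses p i j} = (if i \<in> set p then {nx p i} else {})" by auto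
    then show "(\<Sum>j\<in>{j\<in>V. traverses p i j}. G p j) = (if i \<in> set p then G p (nx p i) else 0)" by simp
  qed
  also have "\<dots> = (\<Sum>p\<in>{p\<in>P. i \<in> set p}. G p (nx p i))" by (rule sum.inter_filter[symmetric, OF assms(1)])
  finally show ?thesis by simp
qed

lemma sum_pr_eq_sum_traverses:
  assumes "finite P" "finite V" "\<forall>p\<in>P. distinct p \<and> set p \<subseteq> V \<and> j \<noteq> hd p"
  shows "(\<Sum>p\<in>{p\<in>P. j \<in> set p}. G p (pr p j)) = (\<Sum>i\<in>V. \<Sum>p\<in>{p\<in>P. traverses p i j}. G p i)"
proof -
  have "(\<Sum>i\<in>V. \<Sum>p\<in>{p\<in>P. traverses p i j}. G p i) = (\<Sum>p\<in>P. \<Sum>i\<in>{i\<in>V. traverses p i j}. G p i)"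
    by (rule sum.swap_restrict) (use assms(1,2) in auto)
  also have "\<dots> = (\<Sum>p\<in>P. if j \<in> set p then G p (pr p j) else 0)"
  proof (rule sum.cong[OF refl])
    fix p assume p: "p \<in> P"
    have p': "distinct p" "set p \<subseteq> V" "j \<noteq> hd p" using p assms(3) by auto
    then have "traverses p i j \<longleftrightarrow> j \<in> set p \<and> i = pr p j" for i using traverses_iff_pr by simp
    moreover have "traverses p (pr p j) j \<Longrightarrow> pr p j \<in> V" using p'(2) traverses_set[of p "pr p j" j] by auto
    ultimately have "{i\<in>V. traverses p i j} = (if j \<in> set p then {pr p j} else {})" by auto
    then show "(\<Sum>i\<in>{i\<in>V. traverses p i j}. G p i) = (if j \<in> set p then G p (pr p j) else 0)" by simp
  qed
  also have "\<dots> = (\<Sum>p\<in>{p\<in>P. j \<in> set p}. G p (pr p j))" by (rule sum.inter_filter[symmetric, OF assms(1)])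
  finally show ?thesis by simp
qed

definition link_flow :: "nat list set \<Rightarrow> (nat list \<Rightarrow> real) \<Rightarrow> nat \<Rightarrow> nat \<Rightarrow> real" where
  "link_flow P a i j = (\<Sum>p\<in>{p\<in>P. traverses p i j}. a p)"

context
  fixes N :: nat and E :: "(nat \<times> nat) set" and ell :: "nat \<Rightarrow> nat \<Rightarrow> real"
  assumes network: "valid_network N E ell"
begin

lemma ell_pos: "(i, j) \<in> E \<Longrightarrow> 0 < ell j i"
  using network unfolding valid_network_def by auto

lemma ell_eq_0: "(i, j) \<notin> E \<Longrightarrow> ell j i = 0"
  using network unfolding valid_network_def by auto

lemma ell_nonneg: "0 \<le> ell j i"
  using ell_pos ell_eq_0 by (metis less_eq_real_def)

lemma pathsD:
  assumes "p \<in> paths N E"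
  shows "distinct p" "p \<noteq> []" "hd p = 0" "last p = N + 1"
    "\<forall>k. Suc k < length p \<longrightarrow> (p ! k, p ! Suc k) \<in> E"
  using assms unfolding paths_def by auto

lemma E_subset: "E \<subseteq> {0..N+1} \<times> {0..N+1}"
  using network unfolding valid_network_def by auto

lemma set_path_subset: "p \<in> paths N E \<Longrightarrow> set p \<subseteq> {0..N+1}"
  using chain_set_subset[OF pathsD(5) E_subset pathsD(2)] pathsD(3) by simp

lemma finite_paths: "finite (paths N E)"
proof -
  have "paths N E \<subseteq> {p. set p \<subseteq> {0..N+1} \<and> length p \<le> N + 2}"
  proof
    fix p assume p: "p \<in> paths N E"
    have "length p = card (set p)" using pathsD(1)[OF p] by (simp add: distinct_card)
    also have "\<dots> \<le> N + 2" using card_mono[OF _ set_path_subset[OF p]] by simp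
    finally show "p \<in> {p. set p \<subseteq> {0..N+1} \<and> length p \<le> N + 2}" using set_path_subset[OF p] by simp
  qed
  then show ?thesis by (rule finite_subset) (rule finite_lists_length_le, simp)
qed

lemma path_cap_pos:
  assumes "p \<in> paths N E"
  shows "0 < path_cap ell p"
proof -
  let ?L = "{ell (p ! Suc k) (p ! k) | k. Suc k < length p}"
  have "Suc 0 < length p" using length_gt_1_if_hd_neq_last[of p] pathsD[OF assms] by simp
  then have "?L \<noteq> {}" by blast
  moreover have "finite ?L"
    by (rule finite_subset[of _ "(\<lambda>k. ell (p ! Suc k) (p ! k)) ` {..<length p}"]) auto
  ultimately have "path_cap ell p \<in> ?L" unfolding path_cap_def by (rule Min_in[rotated])
  then show ?thesis using ell_pos pathsD(5)[OF assms] by auto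
qed

lemma traverses_path_edge: "p \<in> paths N E \<Longrightarrow> traverses p i j \<Longrightarrow> (i, j) \<in> E"
  using pathsD(5) unfolding traverses_def by blast

lemma P1_out_sum_eq_link_flow:
  assumes "i \<le> N"
  shows "(\<Sum>p\<in>{p\<in>paths N E. i \<in> set p}. x p * fp ell p (nx p i) i)
       = (\<Sum>j\<in>{0..N+1}. link_flow (paths N E) (\<lambda>p. x p * path_cap ell p) i j / ell j i)"
proof -
  have "\<forall>p\<in>paths N E. distinct p \<and> set p \<subseteq> {0..N+1} \<and> i \<noteq> last p"
    using pathsD(1,4) set_path_subset assms by fastforce
  from sum_nx_eq_sum_traverses[OF finite_paths finite_atLeastAtMost this]
  show ?thesis unfolding fp_def link_flow_def by (simp add: sum_divide_distrib)
qed

lemma P1_in_sum_eq_link_flow: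
  assumes "1 \<le> j"
  shows "(\<Sum>p\<in>{p\<in>paths N E. j \<in> set p}. x p * fp ell p j (pr p j))
       = (\<Sum>i\<in>{0..N+1}. link_flow (paths N E) (\<lambda>p. x p * path_cap ell p) i j / ell j i)"
proof -
  have "\<forall>p\<in>paths N E. distinct p \<and> set p \<subseteq> {0..N+1} \<and> j \<noteq> hd p"
    using pathsD(1,3) set_path_subset assms by fastforce
  from sum_pr_eq_sum_traverses[OF finite_paths finite_atLeastAtMost this]
  show ?thesis unfolding fp_def link_flow_def by (simp add: sum_divide_distrib)
qed

lemma excess_link_flow:
  assumes "P \<subseteq> paths N E"
  shows "excess {0..N+1} (link_flow P a) x = (\<Sum>p\<in>P. a p) * ((if x = N + 1 then 1 else 0) - (if x = 0 then 1 else 0))"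
proof -
  have finP: "finite P" using finite_paths assms by (rule finite_subset[rotated])
  have "link_flow P a = (\<lambda>u v. \<Sum>p\<in>P. a p * walk_flow (\<lambda>_. True) p u v)"
    using assms pathsD(1) unfolding link_flow_def
    by (auto simp: fun_eq_iff walk_flow_forward sum.inter_filter[OF finP] if_distrib intro!: sum.cong)
  then have "excess {0..N+1} (link_flow P a) x = (\<Sum>p\<in>P. a p * excess {0..N+1} (walk_flow (\<lambda>_. True) p) x)"
    by (simp only: excess_sum excess_mult)
  also have "\<dots> = (\<Sum>p\<in>P. a p * ((if x = N + 1 then 1 else 0) - (if x = 0 then 1 else 0)))"
    using assms pathsD(2-4) set_path_subset by (intro sum.cong refl) (auto simp: excess_walk_flow)
  finally show ?thesis by (simp add: sum_distrib_right)
qed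

lemma link_flow_eq_0: "(i, j) \<notin> E \<Longrightarrow> link_flow (paths N E) a i j = 0"
  using traverses_path_edge unfolding link_flow_def by (metis (no_types, lifting) empty_Collect_eq sum.empty)

text \<open>Also for non-links, where \<open>ell j i = 0\<close> and no path carries flow.\<close>

lemma link_flow_div_mult: "link_flow (paths N E) a i j / ell j i * ell j i = link_flow (paths N E) a i j"
proof (cases "(i, j) \<in> E")
  case True
  then show ?thesis using ell_pos[of i j] by simp
qed (simp add: link_flow_eq_0)

lemma min_cut_value_le_C_cs_iid:
  assumes "prob_vector N lam"
  shows "Min (cut_value N ell lam ` cuts N) \<le> C_cs_iid N ell"
  unfolding C_cs_iid_def
proof (rule cSup_upper)
  show "bdd_above {Min (cut_value N ell lam ` cuts N) | lam. prob_vector N lam}"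
  proof (rule bdd_aboveI, safe)
    fix lam assume lam: "prob_vector N lam"
    have "Min (cut_value N ell lam ` cuts N) \<le> cut_value N ell lam {0}"
      using cuts_finite_nonempty by simp
    also have "\<dots> \<le> (\<Sum>j\<in>{0..N+1} - {0}. ell j 0)"
      unfolding cut_value_link_activation
      using link_activation_le_1[OF lam] link_activation_nonneg[OF lam] ell_nonneg
      by (simp, intro sum_mono mult_left_le_one_le) auto
    finally show "Min (cut_value N ell lam ` cuts N) \<le> (\<Sum>j\<in>{0..N+1} - {0}. ell j 0)" .
  qed
qed (use assms in blast)

lemma path_flow_le_cut_value:
  assumes "P \<subseteq> paths N E" "\<forall>p\<in>P. 0 \<le> a p" "\<Omega> \<in> cuts N"
    and le: "\<forall>i\<in>\<Omega>. \<forall>j\<in>{0..N+1} - \<Omega>. link_flow P a i j \<le> link_activation N lam i j * ell j i"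
  shows "(\<Sum>p\<in>P. a p) \<le> cut_value N ell lam \<Omega>"
proof -
  have \<Omega>: "0 \<in> \<Omega>" "\<Omega> \<subseteq> {0..N+1}" using assms(3) unfolding cuts_def by auto
  have "(\<Sum>p\<in>P. a p) = - excess {0..N+1} (link_flow P a) 0" using excess_link_flow[OF assms(1)] by simp
  also have "\<dots> \<le> (\<Sum>i\<in>\<Omega>. \<Sum>j\<in>{0..N+1} - \<Omega>. link_flow P a i j)"
    using \<Omega> excess_link_flow[OF assms(1)] assms(2) assms(3)
    by (intro flow_value_le_cut) (auto simp: link_flow_def cuts_def intro: sum_nonneg)
  also have "\<dots> \<le> cut_value N ell lam \<Omega>"
    unfolding cut_value_link_activation using le by (intro sum_mono) auto
  finally show ?thesis .
qed

lemma P1_feasible_link_flow_substochastic: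
  assumes x: "P1_feasible N E ell x"
  defines "z i j \<equiv> link_flow (paths N E) (\<lambda>p. x p * path_cap ell p) i j / ell j i"
  shows "\<forall>i\<in>{0..N}. \<forall>j\<in>{1..N+1}. 0 \<le> z i j"
    "\<forall>i\<in>{0..N}. (\<Sum>j\<in>{1..N+1}. z i j) \<le> 1" "\<forall>j\<in>{1..N+1}. (\<Sum>i\<in>{0..N}. z i j) \<le> 1"
proof -
  have "\<forall>p\<in>paths N E. 0 \<le> x p * path_cap ell p"
    using x path_cap_pos unfolding P1_feasible_def by (simp add: less_imp_le)
  then have z_nonneg: "0 \<le> z i j" for i j
    unfolding z_def link_flow_def using ell_nonneg by (intro divide_nonneg_nonneg sum_nonneg) auto
  then show "\<forall>i\<in>{0..N}. \<forall>j\<in>{1..N+1}. 0 \<le> z i j" by blast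
  show "\<forall>i\<in>{0..N}. (\<Sum>j\<in>{1..N+1}. z i j) \<le> 1"
  proof
    fix i assume i: "i \<in> {0..N}"
    have "(\<Sum>j\<in>{1..N+1}. z i j) \<le> (\<Sum>j\<in>{0..N+1}. z i j)" using z_nonneg by (intro sum_mono2) auto
    also have "\<dots> = (\<Sum>p\<in>{p\<in>paths N E. i \<in> set p}. x p * fp ell p (nx p i) i)"
      using P1_out_sum_eq_link_flow[of i x] i unfolding z_def by simp
    also have "\<dots> \<le> 1" using x i unfolding P1_feasible_def by blast
    finally show "(\<Sum>j\<in>{1..N+1}. z i j) \<le> 1" .
  qed
  show "\<forall>j\<in>{1..N+1}. (\<Sum>i\<in>{0..N}. z i j) \<le> 1"
  proof
    fix j assume j: "j \<in> {1..N+1}"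
    have "(\<Sum>i\<in>{0..N}. z i j) \<le> (\<Sum>i\<in>{0..N+1}. z i j)" using z_nonneg by (intro sum_mono2) auto
    also have "\<dots> = (\<Sum>p\<in>{p\<in>paths N E. j \<in> set p}. x p * fp ell p j (pr p j))"
      using P1_in_sum_eq_link_flow[of j x] j unfolding z_def by simp
    also have "\<dots> \<le> 1" using x j unfolding P1_feasible_def by blast
    finally show "(\<Sum>i\<in>{0..N}. z i j) \<le> 1" .
  qed
qed

theorem P1_objective_le_C_cs_iid:
  assumes x: "P1_feasible N E ell x"
  shows "(\<Sum>p\<in>paths N E. x p * path_cap ell p) \<le> C_cs_iid N ell"
proof -
  let ?a = "\<lambda>p. x p * path_cap ell p"
  obtain lam where lam: "prob_vector N lam" "\<forall>i\<in>{0..N}. \<forall>j\<in>{1..N+1}. i \<noteq> j \<longrightarrow>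
      link_activation N lam i j = link_flow (paths N E) ?a i j / ell j i"
    by (rule prob_vector_with_link_activation[OF P1_feasible_link_flow_substochastic[OF x]])
  have "(\<Sum>p\<in>paths N E. ?a p) \<le> cut_value N ell lam \<Omega>" if "\<Omega> \<in> cuts N" for \<Omega>
  proof (rule path_flow_le_cut_value[OF order_refl _ that])
    show "\<forall>p\<in>paths N E. 0 \<le> ?a p" using x path_cap_pos unfolding P1_feasible_def by (simp add: less_imp_le)
    have "i \<in> {0..N}" "j \<in> {1..N+1}" "i \<noteq> j" if "i \<in> \<Omega>" "j \<in> {0..N+1} - \<Omega>" for i j
      using that \<open>\<Omega> \<in> cuts N\<close> unfolding cuts_def by (auto simp: Suc_le_eq intro!: Nat.gr0I)
    then show "\<forall>i\<in>\<Omega>. \<forall>j\<in>{0..N+1} - \<Omega>. link_flow (paths N E) ?a i j \<le> link_activation N lam i j * ell j i"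
      using lam(2) link_flow_div_mult by simp
  qed
  then have "(\<Sum>p\<in>paths N E. ?a p) \<le> Min (cut_value N ell lam ` cuts N)"
    using cuts_finite_nonempty by (subst Min_ge_iff) auto
  also have "\<dots> \<le> C_cs_iid N ell" by (rule min_cut_value_le_C_cs_iid[OF lam(1)])
  finally show ?thesis .
qed

lemma P1_feasible_if_link_flow_le:
  assumes lam: "prob_vector N lam" and x_nonneg: "\<forall>p\<in>paths N E. 0 \<le> x p"
    and le: "\<forall>i\<in>{0..N+1}. \<forall>j\<in>{0..N+1}.
               link_flow (paths N E) (\<lambda>p. x p * path_cap ell p) i j \<le> link_activation N lam i j * ell j i"
  shows "P1_feasible N E ell x"
proof -
  let ?f = "link_flow (paths N E) (\<lambda>p. x p * path_cap ell p)"
  have div_le: "?f i j / ell j i \<le> link_activation N lam i j" if "i \<in> {0..N+1}" "j \<in> {0..N+1}" for i j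
  proof (cases "ell j i = 0")
    case False
    then have "0 < ell j i" using ell_nonneg[of j i] by simp
    then show ?thesis using le that by (simp add: divide_le_eq)
  qed (simp add: link_activation_nonneg[OF lam])
  show ?thesis
    unfolding P1_feasible_def
  proof (intro conjI ballI x_nonneg[rule_format])
    fix i assume "i \<in> {0..N}"
    then have "(\<Sum>p\<in>{p\<in>paths N E. i \<in> set p}. x p * fp ell p (nx p i) i) = (\<Sum>j\<in>{0..N+1}. ?f i j / ell j i)"
      by (intro P1_out_sum_eq_link_flow) simp
    also have "\<dots> \<le> (\<Sum>j\<in>{0..N+1}. link_activation N lam i j)"
      using \<open>i \<in> {0..N}\<close> by (intro sum_mono div_le) auto
    also have "\<dots> \<le> 1" by (rule sum_link_activation_out_le_1[OF lam]) simp
    finally show "(\<Sum>p\<in>{p\<in>paths N E. i \<in> set p}. x p * fp ell p (nx p i) i) \<le> 1" .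
  next
    fix j assume "j \<in> {1..N+1}"
    then have "(\<Sum>p\<in>{p\<in>paths N E. j \<in> set p}. x p * fp ell p j (pr p j)) = (\<Sum>i\<in>{0..N+1}. ?f i j / ell j i)"
      by (intro P1_in_sum_eq_link_flow) simp
    also have "\<dots> \<le> (\<Sum>i\<in>{0..N+1}. link_activation N lam i j)"
      using \<open>j \<in> {1..N+1}\<close> by (intro sum_mono div_le) auto
    also have "\<dots> \<le> 1" by (rule sum_link_activation_in_le_1[OF lam]) simp
    finally show "(\<Sum>p\<in>{p\<in>paths N E. j \<in> set p}. x p * fp ell p j (pr p j)) \<le> 1" .
  qed
qed

lemma P1_objective_le_P1_value: "P1_feasible N E ell x \<Longrightarrow> (\<Sum>p\<in>paths N E. x p * path_cap ell p) \<le> P1_value N E ell"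
  unfolding P1_value_def
  by (rule cSup_upper) (use P1_objective_le_C_cs_iid in \<open>auto intro!: bdd_aboveI[of _ "C_cs_iid N ell"]\<close>)

lemma path_flow_le_P1_value:
  assumes lam: "prob_vector N lam" and P: "P \<subseteq> paths N E" "\<forall>p\<in>P. 0 \<le> a p"
    and le: "\<forall>i\<in>{0..N+1}. \<forall>j\<in>{0..N+1}. link_flow P a i j \<le> link_activation N lam i j * ell j i"
  shows "(\<Sum>p\<in>P. a p) \<le> P1_value N E ell"
proof -
  define x where "x p = (if p \<in> P then a p else 0) / path_cap ell p" for p
  have xa: "x p * path_cap ell p = (if p \<in> P then a p else 0)" if "p \<in> paths N E" for p
    using path_cap_pos[OF that] unfolding x_def by simp
  have lf: "link_flow (paths N E) (\<lambda>p. x p * path_cap ell p) i j = link_flow P a i j" for i j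
    unfolding link_flow_def using P(1) finite_paths xa
    by (subst sum.mono_neutral_cong_right[where S="{p\<in>P. traverses p i j}"]) auto
  have "P1_feasible N E ell x"
  proof (rule P1_feasible_if_link_flow_le[OF lam])
    show "\<forall>p\<in>paths N E. 0 \<le> x p" unfolding x_def using P(2) path_cap_pos by (auto intro: divide_nonneg_pos)
  qed (use le in \<open>simp only: lf\<close>)
  moreover have "(\<Sum>p\<in>paths N E. x p * path_cap ell p) = (\<Sum>p\<in>P. a p)"
    using P(1) finite_paths xa by (subst sum.mono_neutral_cong_right[where S=P]) auto
  ultimately show ?thesis using P1_objective_le_P1_value by metis
qed

theorem min_cut_value_le_P1_value:
  assumes lam: "prob_vector N lam"
  shows "Min (cut_value N ell lam ` cuts N) \<le> P1_value N E ell"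
proof -
  let ?V = "{0..N+1}"
  define cap where "cap i j = link_activation N lam i j * ell j i" for i j
  have cap_nonneg: "\<forall>u\<in>?V. \<forall>v\<in>?V. 0 \<le> cap u v"
    unfolding cap_def using link_activation_nonneg[OF lam] ell_nonneg by simp
  obtain g where g: "is_flow ?V 0 (N + 1) cap g"
    and g_max: "\<forall>g'. is_flow ?V 0 (N + 1) cap g' \<longrightarrow> - excess ?V g' 0 \<le> - excess ?V g 0"
    using max_flow_exists[OF finite_atLeastAtMost _ cap_nonneg, where t="N + 1"] by auto
  obtain \<Omega> where \<Omega>: "0 \<in> \<Omega>" "\<Omega> \<subseteq> ?V" "N + 1 \<notin> \<Omega>" "- excess ?V g 0 = (\<Sum>i\<in>\<Omega>. \<Sum>j\<in>?V - \<Omega>. cap i j)"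
    using max_flow_min_cut[OF _ _ _ g g_max] by auto
  have "\<Omega> \<in> cuts N" unfolding cuts_def using \<Omega>(1-3) by (auto simp: subset_iff le_Suc_eq)
  then have min_le: "Min (cut_value N ell lam ` cuts N) \<le> - excess ?V g 0"
    using \<Omega>(4) cuts_finite_nonempty unfolding cut_value_link_activation cap_def by simp
  have g_nonneg: "\<forall>u\<in>?V. \<forall>v\<in>?V. 0 \<le> g u v" and g_cons: "\<forall>x\<in>?V - {0, N + 1}. excess ?V g x = 0"
    using g unfolding is_flow_def by auto
  obtain P a where P: "finite P"
    "\<forall>p\<in>P. distinct p \<and> p \<noteq> [] \<and> hd p = 0 \<and> last p = N + 1 \<and> 0 \<le> a p \<and>
       (\<forall>k. Suc k < length p \<longrightarrow> (p ! k, p ! Suc k) \<in> flow_support ?V g)"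
    "- excess ?V g 0 \<le> (\<Sum>p\<in>P. a p)"
    "\<forall>u\<in>?V. \<forall>v\<in>?V. link_flow P a u v \<le> g u v"
    using flow_path_decomposition[OF finite_atLeastAtMost _ _ g_nonneg g_cons] unfolding link_flow_def by auto
  have "(u, v) \<in> E" if "(u, v) \<in> flow_support ?V g" for u v
  proof -
    have "0 < cap u v" using that g unfolding flow_support_def is_flow_def by fastforce
    then show ?thesis using ell_eq_0 unfolding cap_def by fastforce
  qed
  then have "P \<subseteq> paths N E" using P(2) unfolding paths_def by blast
  moreover have "\<forall>i\<in>?V. \<forall>j\<in>?V. link_flow P a i j \<le> link_activation N lam i j * ell j i"
    using P(4) g unfolding is_flow_def cap_def by (meson order_trans)
  ultimately have "(\<Sum>p\<in>P. a p) \<le> P1_value N E ell" using path_flow_le_P1_value[OF lam] P(2) by blast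
  then show ?thesis using min_le P(3) by linarith
qed

end

theorem theorem2:
  fixes N :: nat and E :: "(nat \<times> nat) set" and ell :: "nat \<Rightarrow> nat \<Rightarrow> real"
  assumes "valid_network N E ell"
  shows "C_cs_iid N ell = P1_value N E ell"
proof (rule antisym)
  show "C_cs_iid N ell \<le> P1_value N E ell"
    unfolding C_cs_iid_def using prob_vector_exists min_cut_value_le_P1_value[OF assms]
    by (intro cSup_least) auto
  have "P1_feasible N E ell (\<lambda>_. 0)" unfolding P1_feasible_def by simp
  then show "P1_value N E ell \<le> C_cs_iid N ell"
    unfolding P1_value_def using P1_objective_le_C_cs_iid[OF assms] by (intro cSup_least) auto
qed

end
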